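(* Fix integers $2\le r\le k$, let $u(n)$ satisfy $u(n)\to\infty$, $u(n)/n\to0$, and let $m=\lfloor\mu n^{r-1}/u(n)^{r-2}\rfloor$ for a constant $\mu>0$. Then for any constants $\tau>0$ and $\lambda\in\mathbb R$, $$\mathbb E\bigl[\exp\{\lambda\,\overline{E}(\lfloor\tau u(n)\rfloor)\}\bigr]=\exp\Bigl\{\varphi_{k,r}(\mu,\lambda,\tau)\,u(n)+O\bigl(\max\{1,u(n)^2/n\}\bigr)\Bigr\}.$$
   Context: Let $N(t):=n-u(n)-t$ and $p_j(n):=\binom{n-u(n)}{j}\binom{u(n)}{k-j}/\binom{n}{k}$ for $j=0,\dots,k$. Let $(C_0,\dots,C_k)$ have the multinomial distribution with $m$ trials and cell probabilities $p_0(n),\dots,p_k(n)$ (this is the distribution of the numbers of constraints of the random bipartite graph having exactly $j$ neighbours in $\{u(n)+1,\dots,n\}$). The Markov chain $(\overline{E}(t),\overline{C}_{k-r+2}(t),\dots,\overline{C}_k(t))_{t\ge0}$ starts at $\overline{E}(0)=\sum_{j=1}^{k-r+1}jC_j$, $\overline{C}_j(0)=C_j$ for $k-r+2\le j\le k$, and evolves by $\overline{C}_k(t+1)=\overline{C}_k(t)$; $\overline{C}_j(t+1)=\overline{C}_j(t)+\overline{R}_{j+1}(t)$ for $k-r+2\le j\le k-1$; $\overline{E}(t+1)=\overline{E}(t)-1+(k-r+1)\overline{R}_{k-r+2}(t)$, where, conditionally on the state at time $t$, the $\overline{R}_j(t)$ ($k-r+2\le j\le k$) are independent with $\overline{R}_j(t)\sim\mathrm{Binom}(\overline{C}_j(t),\,j/N(t))$.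 $\varphi_{k,r}(\mu,\lambda,\tau):=\mu\bigl(e^{(k-r+1)\lambda}-1\bigr)\binom{k}{r-1}(1+\tau)^{r-1}-\lambda\tau$. *)

theory Defs
  imports "HOL-Probability.Probability" "HOL-Library.Landau_Symbols"
begin

definition Nt :: "nat \<Rightarrow> nat \<Rightarrow> nat \<Rightarrow> real" where
  "Nt n un t = real n - real un - real t"

definition pj :: "nat \<Rightarrow> nat \<Rightarrow> nat \<Rightarrow> nat \<Rightarrow> real" where
  "pj k n un j = real ((n - un) choose j) * real (un choose (k - j)) / real (n choose k)"

text \<open>Distribution of a single cell index j in {0..k} with probabilities p_j(n).
  (These probabilities sum to 1 whenever u(n) \<le> n, by Vandermonde.)\<close>
definition cell_pmf :: "nat \<Rightarrow> nat \<Rightarrow> nat \<Rightarrow> nat pmf" where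
  "cell_pmf k n un = embed_pmf (\<lambda>j. if j \<le> k then pj k n un j else 0)"

fun multinom_pmf :: "nat pmf \<Rightarrow> nat \<Rightarrow> (nat \<Rightarrow> nat) pmf" where
  "multinom_pmf P 0 = return_pmf (\<lambda>_. 0)"
| "multinom_pmf P (Suc m) =
     bind_pmf (multinom_pmf P m) (\<lambda>c. bind_pmf P (\<lambda>j. return_pmf (c(j := c j + 1))))"

fun R_pmf :: "real \<Rightarrow> (nat \<Rightarrow> nat) \<Rightarrow> nat list \<Rightarrow> (nat \<Rightarrow> nat) pmf" where
  "R_pmf N C [] = return_pmf (\<lambda>_. 0)"
| "R_pmf N C (j # js) =
     bind_pmf (R_pmf N C js) (\<lambda>R. bind_pmf (binomial_pmf (C j) (real j / N))
        (\<lambda>x. return_pmf (R(j := x))))"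

text \<open>The Markov chain (E(t), C_{k-r+2}(t), ..., C_k(t)); the state stores
  E(t) as an integer and the C-values as a function on indices
  (only indices k-r+2..k are relevant).\<close>
fun chain_pmf :: "nat \<Rightarrow> nat \<Rightarrow> nat \<Rightarrow> nat \<Rightarrow> nat \<Rightarrow> nat \<Rightarrow> (int \<times> (nat \<Rightarrow> nat)) pmf" where
  "chain_pmf k r n un m 0 =
     bind_pmf (multinom_pmf (cell_pmf k n un) m)
       (\<lambda>C. return_pmf (int (\<Sum>j=1..k-r+1. j * C j), C))"
| "chain_pmf k r n un m (Suc t) =
     bind_pmf (chain_pmf k r n un m t) (\<lambda>(E, C).
       bind_pmf (R_pmf (Nt n un t) C [k-r+2..<k+1]) (\<lambda>R.
         return_pmf (E - 1 + int (k-r+1) * int (R (k-r+2)),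
                     \<lambda>j. if k-r+2 \<le> j \<and> j \<le> k-1 then C j + R (j+1) else C j)))"

definition phi :: "nat \<Rightarrow> nat \<Rightarrow> real \<Rightarrow> real \<Rightarrow> real \<Rightarrow> real" where
  "phi k r \<mu> lam \<tau> = \<mu> * (exp (real (k-r+1) * lam) - 1) * real (k choose (r-1)) * (1+\<tau>)^(r-1)
      - lam * \<tau>"

end

theory Submission
  imports Defs
begin

text \<open>
  Write \<open>A = k-r+1\<close>. For a vector \<open>x\<close>, weight a state \<open>(E, C)\<close> of the chain by
  \<open>exp(\<lambda>E) \<Prod>_{A<j\<le>k} x_j^{C_j}\<close>. Because the removals \<open>R_j\<close> are binomial, one step of the chain
  maps the expected weight for \<open>x\<close> to \<open>e^{-\<lambda>}\<close> times the expected weight for the dual vector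
  \<open>x_j (1 - q_j + q_j x_{j-1})\<close>, \<open>q_j = j/N(t)\<close>. Iterating back to time \<open>0\<close> and using the
  multinomial generating function gives the exact formula
  \<open>E[exp(\<lambda> E(T))] = e^{-\<lambda>T} S^m\<close>, \<open>S = \<Sum>_j p_j z_j\<close>, where \<open>z_j = e^{\<lambda>j}\<close> for \<open>j \<le> A\<close>
  and \<open>z_j\<close> is an entry of the dual vector after \<open>T\<close> steps (\<open>chain_mgf_exact\<close>).
  A purely deterministic induction on \<open>e\<close> shows
  \<open>z_{A+e} - 1 \<approx> (e^{\<lambda>A} - 1) ((A+e)!/A!) \<binom>{T}{e} n^{-e}\<close> (\<open>dual_iter_estimate\<close>).
  Finally, with \<open>U = u(n)\<close> and \<open>\<epsilon> = 1/U + U/n\<close>, the binomial coefficients in \<open>m p_j\<close> are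
  estimated to relative precision \<open>O(\<epsilon>)\<close>, giving \<open>m (S - 1) = (\<phi> + \<lambda>\<tau>) U + O(U\<epsilon>)\<close>; since
  \<open>m\<close> is of order at least \<open>n\<close>, \<open>m ln S = m (S - 1) + O(U^2/n)\<close>, and \<open>U\<epsilon> = 1 + U^2/n\<close>
  yields the theorem (\<open>log_mgf_asymptotics\<close> in the locale \<open>mgf_setting\<close>).
\<close>


section \<open>Generating functions\<close>

lemma expectation_bind_finite:
  fixes h :: "_ \<Rightarrow> real"
  assumes "finite (set_pmf p)" "\<And>x. x \<in> set_pmf p \<Longrightarrow> finite (set_pmf (f x))"
  shows "measure_pmf.expectation (bind_pmf p f) h =
         measure_pmf.expectation p (\<lambda>x. measure_pmf.expectation (f x) h)"
proof -
  have "measure_pmf.expectation (bind_pmf p f) h =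
        (\<Sum>a\<in>set_pmf p. pmf p a *\<^sub>R measure_pmf.expectation (f a) h)"
    by (rule pmf_expectation_bind[OF assms(1)]) (use assms in auto)
  also have "\<dots> = measure_pmf.expectation p (\<lambda>x. measure_pmf.expectation (f x) h)"
    by (subst integral_measure_pmf[OF assms(1)]) auto
  finally show ?thesis .
qed

lemma finite_set_binomial_pmf:
  assumes "0 \<le> p" "p \<le> 1"
  shows "finite (set_pmf (binomial_pmf c p))"
  using assms by (auto simp: set_pmf_binomial_eq)

lemma binomial_pgf:
  assumes "0 \<le> p" "p \<le> 1"
  shows "measure_pmf.expectation (binomial_pmf c p) (\<lambda>x. (y::real) ^ x) = (1 - p + p * y) ^ c"
proof -
  have "measure_pmf.expectation (binomial_pmf c p) (\<lambda>x. y ^ x) =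
        (\<Sum>x\<le>c. pmf (binomial_pmf c p) x *\<^sub>R y ^ x)"
    by (rule integral_measure_pmf) (use assms in \<open>auto simp: set_pmf_binomial_eq split: if_splits\<close>)
  also have "\<dots> = (\<Sum>x\<le>c. real (c choose x) * (p*y) ^ x * (1 - p) ^ (c - x))"
    using assms by (intro sum.cong) (auto simp: power_mult_distrib)
  also have "\<dots> = (p * y + (1 - p)) ^ c"
    by (subst binomial_ring) simp
  finally show ?thesis by (simp add: algebra_simps)
qed

lemma finite_set_R_pmf:
  assumes "\<And>j. j \<in> set js \<Longrightarrow> 0 \<le> real j / N \<and> real j / N \<le> 1"
  shows "finite (set_pmf (R_pmf N C js))"
  using assms by (induction js) (auto simp: finite_set_binomial_pmf)

lemma R_pmf_pgf:
  assumes "\<And>j. j \<in> set js \<Longrightarrow> 0 \<le> real j / N \<and> real j / N \<le> 1" "distinct js"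
  shows "measure_pmf.expectation (R_pmf N C js) (\<lambda>R. \<Prod>i\<in>set js. (y i :: real) ^ R i)
       = (\<Prod>i\<in>set js. (1 - real i / N + real i / N * y i) ^ C i)"
  using assms
proof (induction js)
  case Nil
  then show ?case by simp
next
  case (Cons j js)
  have fin: "finite (set_pmf (R_pmf N C js))" using Cons.prems by (intro finite_set_R_pmf) auto
  have pj: "0 \<le> real j / N" "real j / N \<le> 1" using Cons.prems by auto
  have j_new: "j \<notin> set js" using Cons.prems by auto
  have upd: "(\<Prod>i\<in>insert j (set js). y i ^ (R(j := x)) i) = (\<Prod>i\<in>set js. y i ^ R i) * y j ^ x" for R x
  proof -
    have "(\<Prod>i\<in>set js. y i ^ (R(j := x)) i) = (\<Prod>i\<in>set js. y i ^ R i)"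
      using j_new by (intro prod.cong) auto
    thus ?thesis using j_new by simp
  qed
  have "measure_pmf.expectation (R_pmf N C (j # js)) (\<lambda>R. \<Prod>i\<in>set (j#js). y i ^ R i)
      = measure_pmf.expectation (R_pmf N C js) (\<lambda>R. measure_pmf.expectation
           (binomial_pmf (C j) (real j / N)) (\<lambda>x. (\<Prod>i\<in>set js. y i ^ R i) * y j ^ x))"
    using fin pj by (simp add: expectation_bind_finite finite_set_binomial_pmf upd del: fun_upd_apply)
  also have "\<dots> = measure_pmf.expectation (R_pmf N C js) (\<lambda>R. (\<Prod>i\<in>set js. y i ^ R i)
         * (1 - real j / N + real j / N * y j) ^ C j)"
    using pj by (simp add: binomial_pgf)
  also have "\<dots> = (\<Prod>i\<in>set (j#js). (1 - real i / N + real i / N * y i) ^ C i)"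
    using Cons j_new by simp
  finally show ?case .
qed

lemma expectation_pmf_cong:
  assumes "\<And>x. x \<in> set_pmf p \<Longrightarrow> f x = g x"
  shows "measure_pmf.expectation p f = measure_pmf.expectation p (g :: _ \<Rightarrow> real)"
  by (rule integral_cong_AE) (use assms in \<open>auto simp: AE_measure_pmf_iff\<close>)

lemma finite_set_multinom_pmf: "finite (set_pmf P) \<Longrightarrow> finite (set_pmf (multinom_pmf P m))"
  by (induction m) auto

lemma multinom_pgf:
  assumes P: "set_pmf P \<subseteq> {..k}" "finite (set_pmf P)"
  shows "measure_pmf.expectation (multinom_pmf P m) (\<lambda>c. \<Prod>j\<le>k. (z j :: real) ^ c j)
       = (measure_pmf.expectation P z) ^ m"
proof (induction m)
  case 0
  then show ?case by simp
next
  case (Suc m)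
  have add_ball: "(\<Prod>i\<le>k. z i ^ (c(j := Suc (c j))) i) = (\<Prod>i\<le>k. z i ^ c i) * z j"
    if "j \<le> k" for c j
  proof -
    have "(\<Prod>i\<in>{..k}-{j}. z i ^ (c(j := Suc (c j))) i) = (\<Prod>i\<in>{..k}-{j}. z i ^ c i)"
      by (intro prod.cong) auto
    thus ?thesis using that by (simp add: prod.remove[of "{..k}" j])
  qed
  have "measure_pmf.expectation (multinom_pmf P (Suc m)) (\<lambda>c. \<Prod>j\<le>k. z j ^ c j)
     = measure_pmf.expectation (multinom_pmf P m) (\<lambda>c. measure_pmf.expectation P
          (\<lambda>j. \<Prod>i\<le>k. z i ^ (c(j := Suc (c j))) i))"
    using P by (simp add: expectation_bind_finite finite_set_multinom_pmf)
  also have "\<dots> = measure_pmf.expectation (multinom_pmf P m) (\<lambda>c. measure_pmf.expectation P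
          (\<lambda>j. (\<Prod>i\<le>k. z i ^ c i) * z j))"
    using P by (intro Bochner_Integration.integral_cong refl expectation_pmf_cong)
      (auto simp: add_ball simp del: fun_upd_apply)
  also have "\<dots> = measure_pmf.expectation P z * (measure_pmf.expectation P z) ^ m"
    using Suc by simp
  finally show ?case by simp
qed

lemma pj_nonneg: "0 \<le> pj k n un j"
  by (simp add: pj_def)

lemma pj_sum: assumes "un \<le> n" "k \<le> n" shows "(\<Sum>j\<le>k. pj k n un j) = 1"
proof -
  have "(\<Sum>j\<le>k. ((n - un) choose j) * (un choose (k - j))) = n choose k"
    using vandermonde[of "n-un" un k] assms by simp
  hence "(\<Sum>j\<le>k. real ((n - un) choose j) * real (un choose (k - j))) = real (n choose k)"
    by (metis (no_types, lifting) of_nat_mult of_nat_sum sum.cong)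
  moreover have "real (n choose k) > 0" using assms by simp
  ultimately show ?thesis
    by (simp add: pj_def flip: sum_divide_distrib)
qed

lemma pmf_cell_pmf:
  assumes "un \<le> n" "k \<le> n"
  shows "pmf (cell_pmf k n un) j = (if j \<le> k then pj k n un j else 0)"
  unfolding cell_pmf_def
proof (rule pmf_embed_pmf)
  show "\<And>x. 0 \<le> (if x \<le> k then pj k n un x else 0)" by (simp add: pj_nonneg)
  have "(\<integral>\<^sup>+ x. ennreal (if x \<le> k then pj k n un x else 0) \<partial>count_space UNIV)
     = (\<Sum>x\<le>k. ennreal (if x \<le> k then pj k n un x else 0))"
    by (rule nn_integral_count_space') auto
  also have "\<dots> = ennreal (\<Sum>x\<le>k. pj k n un x)"
    by (simp add: pj_nonneg flip: sum_ennreal)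
  also have "\<dots> = 1" using pj_sum[OF assms] by simp
  finally show "(\<integral>\<^sup>+ x. ennreal (if x \<le> k then pj k n un x else 0) \<partial>count_space UNIV) = 1" .
qed

lemma set_cell_pmf: assumes "un \<le> n" "k \<le> n" shows "set_pmf (cell_pmf k n un) \<subseteq> {..k}"
  using pmf_cell_pmf[OF assms] by (auto simp: set_pmf_iff split: if_splits)

lemma finite_set_cell_pmf: assumes "un \<le> n" "k \<le> n" shows "finite (set_pmf (cell_pmf k n un))"
  using set_cell_pmf[OF assms] finite_subset by blast

lemma cell_pmf_expectation:
  assumes "un \<le> n" "k \<le> n"
  shows "measure_pmf.expectation (cell_pmf k n un) z = (\<Sum>j\<le>k. pj k n un j * z j)"
  by (subst integral_measure_pmf[of "{..k}"])
    (use set_cell_pmf[OF assms] pmf_cell_pmf[OF assms] in auto)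

section \<open>Duality: an exact formula for the moment generating function\<close>

definition chain_weight :: "real \<Rightarrow> nat \<Rightarrow> nat \<Rightarrow> (nat \<Rightarrow> real) \<Rightarrow> int \<times> (nat \<Rightarrow> nat) \<Rightarrow> real" where
  "chain_weight lam A k x = (\<lambda>(E, C). exp (lam * real_of_int E) * (\<Prod>j\<in>{A+1..k}. x j ^ C j))"

text \<open>The dual step: \<open>x_j \<mapsto> x_j (1 - q_j + q_j x_{j-1})\<close> for \<open>A < j \<le> k\<close>; this is how
  one step of the chain with removal probabilities \<open>q_j = j/N(t)\<close> acts on weights.\<close>
definition dual_step :: "nat \<Rightarrow> nat \<Rightarrow> (nat \<Rightarrow> real) \<Rightarrow> (nat \<Rightarrow> real) \<Rightarrow> nat \<Rightarrow> real" where
  "dual_step A k q x j = (if A < j \<and> j \<le> k then x j * (1 - q j + q j * x (j - 1)) else x j)"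

fun dual_iter :: "nat \<Rightarrow> nat \<Rightarrow> (nat \<Rightarrow> nat \<Rightarrow> real) \<Rightarrow> (nat \<Rightarrow> real) \<Rightarrow> nat \<Rightarrow> nat \<Rightarrow> real" where
  "dual_iter A k q x 0 = x"
| "dual_iter A k q x (Suc s) = dual_step A k (q s) (dual_iter A k q x s)"

lemma dual_step_at_A: "dual_step A k q x A = x A"
  by (simp add: dual_step_def)

lemma dual_iter_at_A: "dual_iter A k q x s A = x A"
  by (induction s) (auto simp: dual_step_at_A)

lemma dual_iter_Suc_first:
  "dual_iter A k q x (Suc s) = dual_iter A k (\<lambda>i. q (Suc i)) (dual_step A k (q 0) x) s"
  by (induction s) auto

lemma chain_weight_update:
  assumes "A < k" and xA: "x A = exp (lam * real A)"
  shows "chain_weight lam A k x (E - 1 + int A * int (R (A+1)),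
              \<lambda>j. if A+1 \<le> j \<and> j \<le> k-1 then C j + R (j+1) else C j)
       = exp (-lam) * chain_weight lam A k x (E, C) * (\<Prod>i\<in>{A+1..k}. x (i-1) ^ R i)"
proof -
  have shift: "(\<Prod>j\<in>{A+1..k}. (if j \<le> k - 1 then x j ^ R (j+1) else 1))
           = (\<Prod>i\<in>{A+2..k}. x (i-1) ^ R i)"
  proof -
    obtain k' where k': "k = Suc k'" using assms by (cases k) auto
    have "{A+1..k} = insert k {A+1..k'}" using k' assms by auto
    hence "(\<Prod>j\<in>{A+1..k}. (if j \<le> k - 1 then x j ^ R (j+1) else 1))
        = (\<Prod>j\<in>{A+1..k'}. x (Suc j - 1) ^ R (Suc j))"
      using k' by (auto intro!: prod.cong)
    also have "\<dots> = (\<Prod>i\<in>{Suc (A+1)..Suc k'}. x (i - 1) ^ R i)"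
      by (subst prod.shift_bounds_cl_Suc_ivl) simp
    finally show ?thesis using k' by simp
  qed
  have "(\<Prod>j\<in>{A+1..k}. x j ^ (if A+1 \<le> j \<and> j \<le> k-1 then C j + R (j+1) else C j))
        = (\<Prod>j\<in>{A+1..k}. x j ^ C j) * (\<Prod>j\<in>{A+1..k}. (if j \<le> k - 1 then x j ^ R (j+1) else 1))"
    by (subst prod.distrib[symmetric]) (intro prod.cong, auto simp: power_add)
  moreover have "(\<Prod>i\<in>{A+1..k}. x (i-1) ^ R i) = x A ^ R (A+1) * (\<Prod>i\<in>{A+2..k}. x (i-1) ^ R i)"
    using assms by (subst prod.atLeast_Suc_atMost) auto
  moreover have "exp (lam * real_of_int (E - 1 + int A * int (R (A+1))))
        = exp (-lam) * exp (lam * real_of_int E) * x A ^ R (A+1)"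
  proof -
    have "lam * real_of_int (E - 1 + int A * int (R (A+1)))
        = -lam + lam * real_of_int E + real (R (A+1)) * (lam * real A)"
      by (simp add: algebra_simps)
    hence "exp (lam * real_of_int (E - 1 + int A * int (R (A+1))))
        = exp (-lam) * exp (lam * real_of_int E) * exp (real (R (A+1)) * (lam * real A))"
      by (simp only: exp_add)
    thus ?thesis unfolding xA by (simp only: exp_of_nat_mult)
  qed
  ultimately show ?thesis unfolding chain_weight_def shift by (simp add: algebra_simps)
qed

lemma chain_weight_transition:
  assumes "A < k" and xA: "x A = exp (lam * real A)"
    and q: "\<And>j. j \<in> {A+1..k} \<Longrightarrow> 0 \<le> real j / N \<and> real j / N \<le> 1"
  shows "measure_pmf.expectation (R_pmf N C [A+1..<k+1]) (\<lambda>R.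
           chain_weight lam A k x (E - 1 + int A * int (R (A+1)),
              \<lambda>j. if A+1 \<le> j \<and> j \<le> k-1 then C j + R (j+1) else C j))
       = exp (-lam) * chain_weight lam A k (dual_step A k (\<lambda>j. real j / N) x) (E, C)"
proof -
  let ?pgf = "measure_pmf.expectation (R_pmf N C [A+1..<k+1]) (\<lambda>R. \<Prod>i\<in>{A+1..k}. x (i-1) ^ R i)"
  have set_js: "set [A+1..<k+1] = {A+1..k}" by auto
  have pgf: "?pgf = (\<Prod>i\<in>{A+1..k}. (1 - real i / N + real i / N * x (i-1)) ^ C i)"
    by (rule R_pmf_pgf[of "[A+1..<k+1]", unfolded set_js]) (use q in auto)
  have "(\<Prod>j\<in>{A+1..k}. x j ^ C j) * (\<Prod>i\<in>{A+1..k}. (1 - real i / N + real i / N * x (i-1)) ^ C i)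
      = (\<Prod>j\<in>{A+1..k}. dual_step A k (\<lambda>j. real j / N) x j ^ C j)"
    unfolding dual_step_def by (auto simp: power_mult_distrib prod.distrib[symmetric] intro!: prod.cong)
  hence "exp (-lam) * chain_weight lam A k x (E, C) * ?pgf
      = exp (-lam) * chain_weight lam A k (dual_step A k (\<lambda>j. real j / N) x) (E, C)"
    unfolding pgf chain_weight_def by (simp add: mult.assoc)
  thus ?thesis by (simp only: chain_weight_update[where x=x, OF assms(1,2)] integral_mult_right_zero)
qed

lemma finite_set_chain_pmf:
  assumes "un \<le> n" "k \<le> n"
    and q: "\<And>t' j. t' < t \<Longrightarrow> j \<in> {k-r+2..k} \<Longrightarrow> 0 \<le> real j / Nt n un t' \<and> real j / Nt n un t' \<le> 1"
  shows "finite (set_pmf (chain_pmf k r n un m t))"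
  using q
proof (induction t)
  case 0
  then show ?case using finite_set_cell_pmf[OF assms(1,2)] by (simp add: finite_set_multinom_pmf)
next
  case (Suc t)
  have "finite (set_pmf (R_pmf (Nt n un t) C [k-r+2..<k+1]))" for C
    by (rule finite_set_R_pmf) (use Suc.prems in auto)
  then show ?case using Suc by (auto split: prod.splits)
qed

lemma chain_step:
  assumes A: "A = k - r + 1" and "2 \<le> r" "r \<le> k"
    and q: "\<And>j. j \<in> {A+1..k} \<Longrightarrow> 0 \<le> real j / Nt n un t \<and> real j / Nt n un t \<le> 1"
    and fin: "finite (set_pmf (chain_pmf k r n un m t))"
    and xA: "x A = exp (lam * real A)"
  shows "measure_pmf.expectation (chain_pmf k r n un m (Suc t)) (chain_weight lam A k x)
     = exp (-lam) * measure_pmf.expectation (chain_pmf k r n un m t)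
          (chain_weight lam A k (dual_step A k (\<lambda>j. real j / Nt n un t) x))"
proof -
  define N where "N = Nt n un t"
  have A_lt: "A < k" using assms by auto
  define next_state where "next_state = (\<lambda>(E, C). bind_pmf (R_pmf N C [A+1..<k+1]) (\<lambda>R.
      return_pmf (E - 1 + int A * int (R (A+1)), \<lambda>j. if A+1 \<le> j \<and> j \<le> k-1 then C j + R (j+1) else C j)))"
  have finR: "finite (set_pmf (R_pmf N C [A+1..<k+1]))" for C
    by (rule finite_set_R_pmf) (use q in \<open>auto simp: N_def\<close>)
  have unfold: "chain_pmf k r n un m (Suc t) = bind_pmf (chain_pmf k r n un m t) next_state"
    unfolding next_state_def A N_def by (simp add: numeral_2_eq_2)
  have transition: "measure_pmf.expectation (next_state s) (chain_weight lam A k x)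
      = exp (-lam) * chain_weight lam A k (dual_step A k (\<lambda>j. real j / N) x) s" for s
  proof -
    obtain E C where s: "s = (E, C)" by (cases s)
    show ?thesis unfolding s next_state_def prod.case
      by (subst expectation_bind_finite[OF finR]) (use chain_weight_transition[where x=x, OF A_lt xA] q in
         \<open>auto simp: N_def\<close>)
  qed
  have "measure_pmf.expectation (chain_pmf k r n un m (Suc t)) (chain_weight lam A k x)
      = measure_pmf.expectation (chain_pmf k r n un m t)
          (\<lambda>s. measure_pmf.expectation (next_state s) (chain_weight lam A k x))"
    unfolding unfold
    by (rule expectation_bind_finite[OF fin])
      (use finR in \<open>auto simp: next_state_def simp del: upt_Suc split: prod.splits\<close>)
  thus ?thesis unfolding transition N_def by simp
qed

text \<open>Iterating \<open>chain_step\<close> back to time \<open>0\<close>; the dual steps are applied in reverse time order.\<close>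
lemma chain_dual:
  assumes A: "A = k - r + 1" and "un \<le> n" "k \<le> n" "2 \<le> r" "r \<le> k"
    and q: "\<And>t j. t < T \<Longrightarrow> j \<in> {A+1..k} \<Longrightarrow> 0 \<le> real j / Nt n un t \<and> real j / Nt n un t \<le> 1"
    and xA: "x A = exp (lam * real A)"
  shows "measure_pmf.expectation (chain_pmf k r n un m T) (chain_weight lam A k x)
     = exp (-lam * real T) * measure_pmf.expectation (chain_pmf k r n un m 0)
          (chain_weight lam A k (dual_iter A k (\<lambda>s j. real j / Nt n un (T - Suc s)) x T))"
  using q xA
proof (induction T arbitrary: x)
  case 0
  then show ?case by simp
next
  case (Suc T)
  let ?\<Phi> = "dual_step A k (\<lambda>j. real j / Nt n un T)"
  have fin: "finite (set_pmf (chain_pmf k r n un m T))"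
    by (rule finite_set_chain_pmf[OF assms(2,3)]) (use Suc.prems in \<open>auto simp: A\<close>)
  have "measure_pmf.expectation (chain_pmf k r n un m (Suc T)) (chain_weight lam A k x)
     = exp (-lam) * measure_pmf.expectation (chain_pmf k r n un m T) (chain_weight lam A k (?\<Phi> x))"
    by (rule chain_step) (use assms Suc.prems fin in auto)
  also have "\<dots> = exp (-lam) * (exp (-lam * real T) * measure_pmf.expectation (chain_pmf k r n un m 0)
      (chain_weight lam A k (dual_iter A k (\<lambda>s j. real j / Nt n un (T - Suc s)) (?\<Phi> x) T)))"
    using Suc.IH[of "?\<Phi> x"] Suc.prems by (simp add: dual_step_at_A)
  also have "dual_iter A k (\<lambda>s j. real j / Nt n un (T - Suc s)) (?\<Phi> x) T
      = dual_iter A k (\<lambda>s j. real j / Nt n un (Suc T - Suc s)) x (Suc T)"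
    by (simp only: dual_iter_Suc_first) simp
  finally show ?case by (simp add: algebra_simps flip: exp_add)
qed

text \<open>At time \<open>0\<close> the weight is a product over the multinomial counts, so its expectation is an
  \<open>m\<close>-th power.\<close>
lemma chain_initial:
  assumes A: "A = k - r + 1" and "un \<le> n" "k \<le> n" "2 \<le> r" "r \<le> k"
  shows "measure_pmf.expectation (chain_pmf k r n un m 0) (chain_weight lam A k x)
       = (\<Sum>j\<le>k. pj k n un j * (if j \<le> A then exp (lam * real j) else x j)) ^ m"
proof -
  have A_le: "A \<le> k" using assms by auto
  define z where "z = (\<lambda>j. if j \<le> A then exp (lam * real j) else x j)"
  have weight: "chain_weight lam A k x (int (\<Sum>j=1..A. j * C j), C) = (\<Prod>j\<le>k. z j ^ C j)" for C
  proof -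
    have "{..A} = insert 0 {1..A}" by auto
    hence "(\<Sum>j=1..A. j * C j) = (\<Sum>j\<le>A. j * C j)" by simp
    hence "exp (lam * real_of_int (int (\<Sum>j=1..A. j * C j))) = exp (\<Sum>j\<le>A. real (C j) * (lam * real j))"
      by (simp add: sum_distrib_left algebra_simps)
    also have "\<dots> = (\<Prod>j\<le>A. z j ^ C j)"
      unfolding z_def by (simp add: exp_sum exp_of_nat_mult)
    finally have low: "exp (lam * real_of_int (int (\<Sum>j=1..A. j * C j))) = (\<Prod>j\<le>A. z j ^ C j)" .
    have high: "(\<Prod>j\<in>{A+1..k}. x j ^ C j) = (\<Prod>j\<in>{A+1..k}. z j ^ C j)"
      unfolding z_def by (intro prod.cong) auto
    have "{..k} = {..A} \<union> {A+1..k}" using A_le by auto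
    hence "(\<Prod>j\<le>k. z j ^ C j) = (\<Prod>j\<le>A. z j ^ C j) * (\<Prod>j\<in>{A+1..k}. z j ^ C j)"
      by (simp add: prod.union_disjoint)
    thus ?thesis unfolding chain_weight_def using low high by simp
  qed
  have init: "chain_pmf k r n un m 0
      = bind_pmf (multinom_pmf (cell_pmf k n un) m) (\<lambda>C. return_pmf (int (\<Sum>j=1..A. j * C j), C))"
    by (simp only: chain_pmf.simps A)
  have "measure_pmf.expectation (chain_pmf k r n un m 0) (chain_weight lam A k x)
      = measure_pmf.expectation (multinom_pmf (cell_pmf k n un) m) (\<lambda>C. \<Prod>j\<le>k. z j ^ C j)"
    unfolding init using assms(2,3)
    by (subst expectation_bind_finite)
      (simp_all only: finite_set_multinom_pmf finite_set_cell_pmf expectation_return_pmf weight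
        set_return_pmf finite.emptyI finite_insert)
  also have "\<dots> = (\<Sum>j\<le>k. pj k n un j * z j) ^ m"
    using assms(2,3) by (simp add: multinom_pgf set_cell_pmf finite_set_cell_pmf cell_pmf_expectation)
  finally show ?thesis unfolding z_def .
qed

lemma chain_mgf_exact:
  assumes A: "A = k - r + 1" and "un \<le> n" "k \<le> n" "2 \<le> r" "r \<le> k"
    and q: "\<And>t j. t < T \<Longrightarrow> j \<in> {A+1..k} \<Longrightarrow> 0 \<le> real j / Nt n un t \<and> real j / Nt n un t \<le> 1"
  shows "measure_pmf.expectation (chain_pmf k r n un m T) (\<lambda>(E, C). exp (lam * real_of_int E))
     = exp (-lam * real T) * (\<Sum>j\<le>k. pj k n un j * (if j \<le> A then exp (lam * real j)
        else dual_iter A k (\<lambda>s j. real j / Nt n un (T - Suc s))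
               (\<lambda>j. if j = A then exp (lam * real A) else 1) T j)) ^ m"
proof -
  let ?x = "\<lambda>j. if j = A then exp (lam * real A) else 1"
  have "chain_weight lam A k ?x = (\<lambda>(E, C). exp (lam * real_of_int E))"
    unfolding chain_weight_def by (auto intro!: ext prod.neutral)
  moreover have "measure_pmf.expectation (chain_pmf k r n un m T) (chain_weight lam A k ?x)
     = exp (-lam * real T) * measure_pmf.expectation (chain_pmf k r n un m 0)
          (chain_weight lam A k (dual_iter A k (\<lambda>s j. real j / Nt n un (T - Suc s)) ?x T))"
    by (rule chain_dual) (use assms in auto)
  ultimately show ?thesis
    using chain_initial[OF assms(1-5)] by simp
qed

section \<open>Deterministic estimates for the dual iteration\<close>

lemma discrete_gronwall:
  fixes W a :: "nat \<Rightarrow> real"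
  assumes W0: "W 0 = 0" and rec: "\<And>s. s < T \<Longrightarrow> W (Suc s) = W s + a s * (1 + W s)"
    and a: "\<And>s. s < T \<Longrightarrow> \<bar>a s\<bar> \<le> \<alpha>" and \<alpha>: "0 \<le> \<alpha>" and s: "s \<le> T"
  shows "\<bar>W s\<bar> \<le> real s * \<alpha> * exp (\<alpha> * real T)"
proof -
  have step: "\<bar>W (Suc s)\<bar> \<le> \<bar>W s\<bar> + \<alpha> * (1 + \<bar>W s\<bar>)" if "s < T" for s
  proof -
    have "\<bar>a s * (1 + W s)\<bar> \<le> \<alpha> * (1 + \<bar>W s\<bar>)"
      unfolding abs_mult using a[OF that] by (intro mult_mono) auto
    thus ?thesis using rec[OF that] abs_triangle_ineq[of "W s" "a s * (1 + W s)"] by linarith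
  qed
  have growth: "1 + \<bar>W s\<bar> \<le> exp (\<alpha> * real s)" if "s \<le> T" for s
    using that
  proof (induction s)
    case (Suc s)
    have "1 + \<bar>W (Suc s)\<bar> \<le> (1 + \<bar>W s\<bar>) * (1 + \<alpha>)"
      using step[of s] Suc.prems by (simp add: algebra_simps)
    also have "\<dots> \<le> exp (\<alpha> * real s) * exp \<alpha>"
      using Suc \<alpha> by (intro mult_mono) (auto simp: exp_ge_add_one_self add.commute)
    finally show ?case by (simp add: algebra_simps flip: exp_add)
  qed (simp add: W0)
  show ?thesis
    using s
  proof (induction s)
    case (Suc s)
    have "exp (\<alpha> * real s) \<le> exp (\<alpha> * real T)"
      using Suc.prems \<alpha> by (simp add: mult_left_mono)
    hence bound: "1 + \<bar>W s\<bar> \<le> exp (\<alpha> * real T)" using growth[of s] Suc.prems by (meson Suc_leD order_trans)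
    have "\<alpha> * (1 + \<bar>W s\<bar>) \<le> \<alpha> * exp (\<alpha> * real T)" using bound \<alpha> by (rule mult_left_mono)
    moreover have "\<bar>W s\<bar> \<le> real s * \<alpha> * exp (\<alpha> * real T)" using Suc by simp
    moreover have "\<bar>W (Suc s)\<bar> \<le> \<bar>W s\<bar> + \<alpha> * (1 + \<bar>W s\<bar>)"
      using step Suc.prems by simp
    ultimately show ?case by (simp add: algebra_simps)
  qed (simp add: W0)
qed

lemma increments_bound:
  fixes D :: "nat \<Rightarrow> real"
  assumes "D 0 = 0" and "\<And>s. s < T \<Longrightarrow> \<bar>D (Suc s) - D s\<bar> \<le> P" and "s \<le> T"
  shows "\<bar>D s\<bar> \<le> real s * P"
  using assms(3)
proof (induction s)
  case (Suc s)
  have "\<bar>D (Suc s)\<bar> \<le> \<bar>D s\<bar> + \<bar>D (Suc s) - D s\<bar>" by linarith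
  also have "\<dots> \<le> real s * P + P" using Suc assms(2)[of s] by (intro add_mono) auto
  finally show ?case by (simp add: algebra_simps)
qed (simp add: assms(1))

definition dual_regime ::
  "nat \<Rightarrow> nat \<Rightarrow> real \<Rightarrow> nat \<Rightarrow> real \<Rightarrow> (nat \<Rightarrow> nat \<Rightarrow> real) \<Rightarrow> (nat \<Rightarrow> real) \<Rightarrow> real \<Rightarrow> bool" where
  "dual_regime A k nn T eta q x y \<longleftrightarrow> 0 < nn \<and> 1 \<le> T \<and> real T \<le> nn \<and> 0 \<le> eta \<and> x A = y \<and>
     (\<forall>j. A < j \<and> j \<le> k \<longrightarrow> x j = 1) \<and>
     (\<forall>s<T. \<forall>j. A < j \<and> j \<le> k \<longrightarrow>
        \<bar>q s j\<bar> \<le> 2 * real j / nn \<and> \<bar>q s j - real j / nn\<bar> \<le> real j * eta / nn)"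

text \<open>The leading behaviour of \<open>x_{A+e}(s) - 1\<close>: \<open>(y-1) ((A+e)!/A!) \<binom>{s}{e} / n^e\<close>.\<close>
definition dual_leading :: "nat \<Rightarrow> real \<Rightarrow> real \<Rightarrow> nat \<Rightarrow> nat \<Rightarrow> real" where
  "dual_leading A y nn e s = (y - 1) * (fact (A + e) / fact A) * real (s choose e) / nn ^ e"

lemma dual_leading_Suc:
  "nn > 0 \<Longrightarrow> dual_leading A y nn (Suc e) (Suc s) - dual_leading A y nn (Suc e) s
     = real (A + Suc e) / nn * dual_leading A y nn e s"
  by (simp add: dual_leading_def field_simps)

lemma dual_iter_deviation_Suc:
  assumes "A < d" "d \<le> k"
  shows "dual_iter A k q x (Suc s) d - 1 = (dual_iter A k q x s d - 1)
     + q s d * (dual_iter A k q x s (d-1) - 1) * (1 + (dual_iter A k q x s d - 1))"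
  using assms by (simp add: dual_step_def algebra_simps)

lemma dual_regime_facts:
  assumes H: "dual_regime A k nn T eta q x y" and d: "A < d" "d \<le> k"
  shows "0 < nn" "1 \<le> T" "real T \<le> nn" "0 \<le> eta" "x d = 1"
    and "\<And>s. s < T \<Longrightarrow> \<bar>q s d\<bar> \<le> 2 * real d / nn"
    and "\<And>s. s < T \<Longrightarrow> \<bar>q s d - real d / nn\<bar> \<le> real d * eta / nn"
  using assms unfolding dual_regime_def by auto

lemma dual_iter_first_order:
  assumes H: "dual_regime A k nn T eta q x y" and dk: "A + Suc e \<le> k" and B0: "0 \<le> B"
    and IH: "\<And>s. s \<le> T \<Longrightarrow> \<bar>dual_iter A k q x s (A+e) - 1\<bar> \<le> B * (T/nn)^e"
    and s: "s \<le> T"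
  defines "d \<equiv> real (A + Suc e)"
  shows "\<bar>dual_iter A k q x s (A + Suc e) - 1\<bar> \<le> 2 * d * B * exp (2 * d * B) * (T/nn)^Suc e"
proof -
  have "A < A + Suc e" by simp
  note H' = dual_regime_facts[OF H this dk, unfolded d_def[symmetric]]
  define \<rho> where "\<rho> = real T / nn"
  have \<rho>: "0 < \<rho>" "\<rho> \<le> 1" using H' unfolding \<rho>_def by auto
  define \<alpha> where "\<alpha> = 2 * d / nn * (B * \<rho>^e)"
  have \<alpha>0: "0 \<le> \<alpha>" unfolding \<alpha>_def d_def using H' B0 \<rho> by simp
  have \<alpha>T: "\<alpha> * real T = 2 * d * B * \<rho> ^ Suc e"
    unfolding \<alpha>_def \<rho>_def using H' by (simp add: field_simps)
  have small: "\<bar>q s (A + Suc e) * (dual_iter A k q x s (A + e) - 1)\<bar> \<le> \<alpha>" if "s < T" for s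
    unfolding abs_mult \<alpha>_def using H'(1) H'(6)[OF that] IH[of s] that d_def
    by (intro mult_mono) (auto simp: \<rho>_def)
  have "\<bar>dual_iter A k q x s (A + Suc e) - 1\<bar> \<le> real s * \<alpha> * exp (\<alpha> * real T)"
    by (rule discrete_gronwall[OF _ _ small \<alpha>0 s])
      (use dual_iter_deviation_Suc[of A "A + Suc e" k] dk H' in auto)
  also have "\<dots> \<le> real T * \<alpha> * exp (2 * d * B)"
  proof (intro mult_mono)
    have "\<rho> ^ Suc e \<le> 1" using \<rho> by (intro power_le_one) auto
    hence "2 * d * B * \<rho> ^ Suc e \<le> 2 * d * B" using B0 d_def by (intro mult_left_le) auto
    thus "exp (\<alpha> * real T) \<le> exp (2 * d * B)" unfolding \<alpha>T by simp
  qed (use s \<alpha>0 in auto)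
  also have "\<dots> = 2 * d * B * exp (2 * d * B) * (T/nn)^Suc e"
    using \<alpha>T unfolding \<rho>_def by (simp add: algebra_simps)
  finally show ?thesis .
qed

text \<open>The three error terms in the increment of \<open>x_{A+e+1}(s) - 1 - L_{e+1}(s)\<close>.\<close>
lemma three_term_bound:
  fixes \<delta> V W L c :: real
  assumes "\<bar>\<delta>\<bar> \<le> c * eta" "\<bar>V\<bar> \<le> B * p" "\<bar>W\<bar> \<le> B' * \<rho>" "\<bar>1 + W\<bar> \<le> 1 + B'"
    and "\<bar>V - L\<bar> \<le> K * p * X" and "0 \<le> c" "0 \<le> B" "0 \<le> B'" "0 \<le> p" "0 \<le> eta"
    and "eta \<le> X" "\<rho> \<le> X"
  shows "\<bar>\<delta> * V * (1 + W) + c * V * W + c * (V - L)\<bar> \<le> c * p * ((B * (1 + B') + B * B' + K) * X)"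
proof -
  have t1: "\<bar>\<delta> * V * (1 + W)\<bar> \<le> c * eta * (B * p) * (1 + B')"
    unfolding abs_mult using assms by (intro mult_mono) auto
  have t2: "\<bar>c * V * W\<bar> \<le> c * (B * p) * (B' * \<rho>)"
    unfolding abs_mult using assms by (intro mult_mono) auto
  have t3: "\<bar>c * (V - L)\<bar> \<le> c * (K * p * X)"
    unfolding abs_mult using assms by (intro mult_mono) auto
  have "c * eta * (B * p) * (1 + B') + c * (B * p) * (B' * \<rho>) + c * (K * p * X)
      \<le> c * p * ((B * (1 + B') + B * B' + K) * X)"
  proof -
    have "B * (1 + B') * eta + B * B' * \<rho> \<le> B * (1 + B') * X + B * B' * X"
      using assms by (intro add_mono mult_left_mono) auto
    hence "c * p * (B * (1 + B') * eta + B * B' * \<rho> + K * X) \<le> c * p * ((B * (1 + B') + B * B' + K) * X)"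
      using assms by (intro mult_left_mono) (auto simp: algebra_simps)
    thus ?thesis by (simp add: algebra_simps)
  qed
  thus ?thesis using t1 t2 t3 abs_triangle_ineq[of "\<delta> * V * (1 + W) + c * V * W" "c * (V - L)"]
      abs_triangle_ineq[of "\<delta> * V * (1 + W)" "c * V * W"] by linarith
qed

lemma dual_error_step:
  fixes A k e s :: nat and q :: "nat \<Rightarrow> nat \<Rightarrow> real" and x :: "nat \<Rightarrow> real"
  assumes dk: "A + Suc e \<le> k" and nn: "0 < nn"
  defines "V \<equiv> dual_iter A k q x s (A + e) - 1" and "W \<equiv> dual_iter A k q x s (A + Suc e) - 1"
    and "d \<equiv> real (A + Suc e)"
  shows "(dual_iter A k q x (Suc s) (A + Suc e) - 1 - dual_leading A y nn (Suc e) (Suc s))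
         - (W - dual_leading A y nn (Suc e) s)
       = (q s (A + Suc e) - d / nn) * V * (1 + W) + d / nn * V * W + d / nn * (V - dual_leading A y nn e s)"
proof -
  have "dual_iter A k q x (Suc s) (A + Suc e) - 1 = W + q s (A + Suc e) * V * (1 + W)"
    unfolding W_def V_def using dual_iter_deviation_Suc[of A "A + Suc e" k q x s] dk by simp
  thus ?thesis using dual_leading_Suc[OF nn, of A y e s] nn unfolding d_def by (simp add: field_simps)
qed

lemma dual_error_increment:
  assumes H: "dual_regime A k nn T eta q x y" and dk: "A + Suc e \<le> k"
    and B0: "0 \<le> B" and K0: "0 \<le> K" and B'0: "0 \<le> B'" and s: "s < T"
    and V: "\<bar>dual_iter A k q x s (A+e) - 1\<bar> \<le> B * (T/nn)^e"
    and VL: "\<bar>dual_iter A k q x s (A+e) - 1 - dual_leading A y nn e s\<bar>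
                 \<le> real s * K * (T/nn)^e * (eta + T/nn + 1/T) / T"
    and W: "\<bar>dual_iter A k q x s (A + Suc e) - 1\<bar> \<le> B' * (T/nn)^Suc e"
  defines "d \<equiv> real (A + Suc e)" and "X \<equiv> eta + T/nn + 1/T"
  shows "\<bar>(dual_iter A k q x (Suc s) (A + Suc e) - 1 - dual_leading A y nn (Suc e) (Suc s))
          - (dual_iter A k q x s (A + Suc e) - 1 - dual_leading A y nn (Suc e) s)\<bar>
       \<le> d / nn * (T/nn) ^ e * ((B * (1 + B') + B * B' + K) * X)"
proof -
  have "A < A + Suc e" by simp
  note H' = dual_regime_facts[OF H this dk, unfolded d_def[symmetric]]
  define \<rho> where "\<rho> = real T / nn"
  have \<rho>01: "0 < \<rho>" "\<rho> \<le> 1" using H' unfolding \<rho>_def by auto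
  hence \<rho>: "0 < \<rho>" "\<rho> \<le> 1" "\<rho> ^ e \<le> 1" "\<rho> ^ Suc e \<le> \<rho>" "\<rho> ^ Suc e \<le> 1"
    by (simp_all add: power_le_one mult_left_le mult_le_one)
  have X: "eta \<le> X" "\<rho> \<le> X" "0 \<le> X" unfolding X_def \<rho>_def using H' \<rho> by auto
  have "B' * \<rho> ^ Suc e \<le> B' * \<rho>" "B' * \<rho> ^ Suc e \<le> B'"
    using \<rho> B'0 by (simp_all add: mult_left_mono mult_left_le del: power_Suc)
  moreover have "\<bar>dual_iter A k q x s (A+e) - 1 - dual_leading A y nn e s\<bar> \<le> K * \<rho> ^ e * X"
  proof -
    have "0 \<le> K * \<rho> ^ e * X" using K0 \<rho> X by simp
    hence "real s * (K * \<rho> ^ e * X) \<le> real T * (K * \<rho> ^ e * X)"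
      using s by (intro mult_right_mono) auto
    hence "real s * (K * \<rho> ^ e * X) / real T \<le> K * \<rho> ^ e * X"
      using H'(2) by (simp add: divide_le_eq mult.commute)
    thus ?thesis using VL unfolding \<rho>_def X_def by (simp add: mult.assoc)
  qed
  ultimately show ?thesis
    unfolding dual_error_step[OF dk H'(1), folded d_def]
    using three_term_bound[where \<delta> = "q s (A + Suc e) - d / nn" and c = "d / nn"
        and V = "dual_iter A k q x s (A + e) - 1" and W = "dual_iter A k q x s (A + Suc e) - 1"
        and L = "dual_leading A y nn e s" and p = "\<rho> ^ e" and \<rho> = \<rho> and eta = eta
        and B = B and B' = B' and K = K and X = X]
      H'(1,4) H'(7)[OF s] V W d_def B0 B'0 \<rho> X
    by (simp add: \<rho>_def)
qed

lemma dual_iter_second_order: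
  assumes H: "dual_regime A k nn T eta q x y" and dk: "A + Suc e \<le> k"
    and B0: "0 \<le> B" and K0: "0 \<le> K" and B'0: "0 \<le> B'"
    and IH1: "\<And>s. s \<le> T \<Longrightarrow> \<bar>dual_iter A k q x s (A+e) - 1\<bar> \<le> B * (T/nn)^e"
    and IH2: "\<And>s. s \<le> T \<Longrightarrow> \<bar>dual_iter A k q x s (A+e) - 1 - dual_leading A y nn e s\<bar>
                 \<le> real s * K * (T/nn)^e * (eta + T/nn + 1/T) / T"
    and W1: "\<And>s. s \<le> T \<Longrightarrow> \<bar>dual_iter A k q x s (A + Suc e) - 1\<bar> \<le> B' * (T/nn)^Suc e"
    and s: "s \<le> T"
  defines "d \<equiv> real (A + Suc e)"
  shows "\<bar>dual_iter A k q x s (A + Suc e) - 1 - dual_leading A y nn (Suc e) s\<bar>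
           \<le> real s * (d * (B * (1 + B') + B * B' + K)) * (T/nn)^Suc e * (eta + T/nn + 1/T) / T"
proof -
  have "A < A + Suc e" by simp
  note H' = dual_regime_facts[OF H this dk]
  define D where "D s = dual_iter A k q x s (A + Suc e) - 1 - dual_leading A y nn (Suc e) s" for s
  define P where "P = d / nn * (T/nn) ^ e * ((B * (1 + B') + B * B' + K) * (eta + T/nn + 1/T))"
  have "\<bar>D (Suc s) - D s\<bar> \<le> P" if "s < T" for s
    unfolding D_def P_def d_def
    by (rule dual_error_increment[OF H dk B0 K0 B'0 that]) (use IH1 IH2 W1 that in auto)
  hence "\<bar>D s\<bar> \<le> real s * P"
    by (rule increments_bound[where D = D, rotated]) (use s H'(5) in \<open>auto simp: D_def dual_leading_def\<close>)
  hence "\<bar>dual_iter A k q x s (A + Suc e) - 1 - dual_leading A y nn (Suc e) s\<bar>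
      \<le> real s * (d / nn * (T/nn) ^ e * ((B * (1 + B') + B * B' + K) * (eta + T/nn + 1/T)))"
    unfolding D_def P_def .
  also have "\<dots> = real s * (d * (B * (1 + B') + B * B' + K)) * (T/nn)^Suc e * (eta + T/nn + 1/T) / T"
    using H' by (simp add: field_simps)
  finally show ?thesis .
qed

lemma dual_iter_estimate:
  "\<exists>B K. 0 \<le> B \<and> 0 \<le> K \<and> (\<forall>nn T eta q x s. dual_regime A k nn T eta q x y \<longrightarrow> s \<le> T \<longrightarrow>
     \<bar>dual_iter A k q x s (A+e) - 1\<bar> \<le> B * (T/nn)^e \<and>
     \<bar>dual_iter A k q x s (A+e) - 1 - dual_leading A y nn e s\<bar>
        \<le> real s * K * (T/nn)^e * (eta + T/nn + 1/T) / T)"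
  if "A + e \<le> k"
  using that
proof (induction e)
  case 0
  have "dual_regime A k nn T eta q x y \<Longrightarrow> dual_iter A k q x s A = y" for nn T eta q x s
    by (simp add: dual_iter_at_A dual_regime_def)
  thus ?case by (intro exI[of _ "\<bar>y - 1\<bar>"] exI[of _ 0]) (auto simp: dual_leading_def)
next
  case (Suc e)
  then obtain B K where BK: "0 \<le> B" "0 \<le> K" and IH: "\<And>nn T eta q x s.
     dual_regime A k nn T eta q x y \<Longrightarrow> s \<le> T \<Longrightarrow>
     \<bar>dual_iter A k q x s (A+e) - 1\<bar> \<le> B * (T/nn)^e \<and>
     \<bar>dual_iter A k q x s (A+e) - 1 - dual_leading A y nn e s\<bar>
        \<le> real s * K * (T/nn)^e * (eta + T/nn + 1/T) / T"
    by auto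
  define d where "d = real (A + Suc e)"
  define B' where "B' = 2 * d * B * exp (2 * d * B)"
  define K' where "K' = d * (B * (1 + B') + B * B' + K)"
  have B'0: "0 \<le> B'" unfolding B'_def d_def using BK by simp
  have K'0: "0 \<le> K'" unfolding K'_def d_def using BK B'0 by simp
  have "\<bar>dual_iter A k q x s (A + Suc e) - 1\<bar> \<le> B' * (T/nn)^Suc e \<and>
        \<bar>dual_iter A k q x s (A + Suc e) - 1 - dual_leading A y nn (Suc e) s\<bar>
          \<le> real s * K' * (T/nn)^Suc e * (eta + T/nn + 1/T) / T"
    if H: "dual_regime A k nn T eta q x y" and s: "s \<le> T" for nn T eta q x s
  proof
    have first: "\<bar>dual_iter A k q x s' (A + Suc e) - 1\<bar> \<le> B' * (T/nn)^Suc e" if "s' \<le> T" for s'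
      unfolding B'_def d_def
      by (rule dual_iter_first_order[OF H Suc.prems BK(1)]) (use IH[OF H] that in auto)
    thus "\<bar>dual_iter A k q x s (A + Suc e) - 1\<bar> \<le> B' * (T/nn)^Suc e" using s .
    show "\<bar>dual_iter A k q x s (A + Suc e) - 1 - dual_leading A y nn (Suc e) s\<bar>
          \<le> real s * K' * (T/nn)^Suc e * (eta + T/nn + 1/T) / T"
      unfolding K'_def d_def
      by (rule dual_iter_second_order[OF H Suc.prems BK B'0 _ _ first s]) (use IH[OF H] in auto)
  qed
  thus ?case using B'0 K'0 by blast
qed

section \<open>Relative approximation of sequences\<close>

text \<open>\<open>approx \<epsilon> f g\<close> says \<open>f = g (1 + O(\<epsilon>))\<close>; with \<open>\<epsilon> \<longrightarrow> 0\<close> it is stable under products,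
  powers and reciprocals, which is how the binomial coefficients in \<open>m p_j\<close> are estimated.\<close>
definition approx :: "(nat \<Rightarrow> real) \<Rightarrow> (nat \<Rightarrow> real) \<Rightarrow> (nat \<Rightarrow> real) \<Rightarrow> bool" where
  "approx eps f g \<longleftrightarrow> (\<lambda>n. f n - g n) \<in> O(\<lambda>n. g n * eps n)"

lemma approx_refl: "approx eps f f"
  unfolding approx_def by simp

lemma eps_bigo_one: "eps \<longlonglongrightarrow> 0 \<Longrightarrow> eps \<in> O(\<lambda>_. 1::real)"
  by (rule bigoI_tendsto[where c=0]) auto

text \<open>Products: \<open>f_1 f_2 - g_1 g_2 = (f_1 - g_1)(f_2 - g_2) + (f_1 - g_1) g_2 + g_1 (f_2 - g_2)\<close>.\<close>
lemma approx_mult: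
  assumes eps: "eps \<longlonglongrightarrow> 0" and 1: "approx eps f1 g1" and 2: "approx eps f2 g2"
  shows "approx eps (\<lambda>n. f1 n * f2 n) (\<lambda>n. g1 n * g2 n)"
proof -
  have e1: "eps \<in> O(\<lambda>_. 1)" by (rule eps_bigo_one[OF eps])
  have a: "(\<lambda>n. (f1 n - g1 n) * (f2 n - g2 n)) \<in> O(\<lambda>n. g1 n * g2 n * eps n)"
  proof -
    have "(\<lambda>n. (f1 n - g1 n) * (f2 n - g2 n)) \<in> O(\<lambda>n. (g1 n * eps n) * (g2 n * eps n))"
      using 1 2 unfolding approx_def by (rule landau_o.big.mult)
    also have "(\<lambda>n. (g1 n * eps n) * (g2 n * eps n)) \<in> O(\<lambda>n. (g1 n * g2 n * eps n) * 1)"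
    proof -
      have "(\<lambda>n. (g1 n * g2 n * eps n) * eps n) \<in> O(\<lambda>n. (g1 n * g2 n * eps n) * 1)"
        by (rule landau_o.big.mult[OF _ e1]) simp
      thus ?thesis by (simp add: algebra_simps)
    qed
    finally show ?thesis by simp
  qed
  have b: "(\<lambda>n. (f1 n - g1 n) * g2 n) \<in> O(\<lambda>n. g1 n * g2 n * eps n)"
  proof -
    have "(\<lambda>n. (f1 n - g1 n) * g2 n) \<in> O(\<lambda>n. (g1 n * eps n) * g2 n)"
      using 1 unfolding approx_def by (rule landau_o.big.mult_right)
    thus ?thesis by (simp add: algebra_simps)
  qed
  have c: "(\<lambda>n. g1 n * (f2 n - g2 n)) \<in> O(\<lambda>n. g1 n * g2 n * eps n)"
  proof -
    have "(\<lambda>n. g1 n * (f2 n - g2 n)) \<in> O(\<lambda>n. g1 n * (g2 n * eps n))"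
      using 2 unfolding approx_def by (rule landau_o.big.mult_left)
    thus ?thesis by (simp add: algebra_simps)
  qed
  have "(\<lambda>n. (f1 n - g1 n) * (f2 n - g2 n) + (f1 n - g1 n) * g2 n + g1 n * (f2 n - g2 n))
        \<in> O(\<lambda>n. g1 n * g2 n * eps n)"
    by (intro sum_in_bigo a b c)
  moreover have "(\<lambda>n. (f1 n - g1 n) * (f2 n - g2 n) + (f1 n - g1 n) * g2 n + g1 n * (f2 n - g2 n))
      = (\<lambda>n. f1 n * f2 n - g1 n * g2 n)"
    by (simp add: algebra_simps)
  ultimately show ?thesis unfolding approx_def by simp
qed

lemma approx_cmult: "approx eps f g \<Longrightarrow> approx eps (\<lambda>n. c * f n) (\<lambda>n. c * g n)"
  unfolding approx_def
proof -
  assume "(\<lambda>n. f n - g n) \<in> O(\<lambda>n. g n * eps n)"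
  hence "(\<lambda>n. c * (f n - g n)) \<in> O(\<lambda>n. c * (g n * eps n))" by (rule landau_o.big.mult_left)
  thus "(\<lambda>n. c * f n - c * g n) \<in> O(\<lambda>n. c * g n * eps n)" by (simp add: algebra_simps)
qed

lemma approx_cong:
  assumes "eventually (\<lambda>n. f n = f' n) sequentially" "eventually (\<lambda>n. g n = g' n) sequentially"
    and "approx eps f g"
  shows "approx eps f' g'"
proof -
  have "(\<lambda>n. f n - g n) \<in> O(\<lambda>n. g n * eps n)" using assms(3) unfolding approx_def .
  moreover have "eventually (\<lambda>n. f n - g n = f' n - g' n) sequentially"
    using assms(1,2) by eventually_elim simp
  moreover have "eventually (\<lambda>n. g n * eps n = g' n * eps n) sequentially"
    using assms(2) by eventually_elim simp
  ultimately show ?thesis unfolding approx_def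
    using landau_o.big.in_cong landau_o.big.cong by metis
qed

lemma approx_prod:
  assumes eps: "eps \<longlonglongrightarrow> 0" and "finite I" and "\<And>i. i \<in> I \<Longrightarrow> approx eps (f i) (g i)"
  shows "approx eps (\<lambda>n. \<Prod>i\<in>I. f i n) (\<lambda>n. \<Prod>i\<in>I. g i n)"
  using assms(2,3)
proof (induction I rule: finite_induct)
  case empty
  then show ?case by (simp add: approx_refl)
next
  case (insert x F)
  have "approx eps (\<lambda>n. f x n * (\<Prod>i\<in>F. f i n)) (\<lambda>n. g x n * (\<Prod>i\<in>F. g i n))"
    using insert by (intro approx_mult[OF eps]) auto
  thus ?case using insert by simp
qed

lemma approx_pow:
  assumes eps: "eps \<longlonglongrightarrow> 0" and "approx eps f g"
  shows "approx eps (\<lambda>n. f n ^ j) (\<lambda>n. g n ^ j)"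
  using approx_prod[OF eps, of "{..<j}" "\<lambda>_. f" "\<lambda>_. g"] assms by simp

lemma approx_bigo:
  assumes eps: "eps \<longlonglongrightarrow> 0" and "approx eps f g"
  shows "f \<in> O(g)"
proof -
  have "(\<lambda>n. f n - g n) \<in> O(\<lambda>n. g n * eps n)" using assms(2) unfolding approx_def .
  also have "(\<lambda>n. g n * eps n) \<in> O(\<lambda>n. g n * 1)"
    by (rule landau_o.big.mult_left[OF eps_bigo_one[OF eps]])
  finally have "(\<lambda>n. f n - g n) \<in> O(g)" by simp
  hence "(\<lambda>n. (f n - g n) + g n) \<in> O(g)" by (rule sum_in_bigo(1)) (rule landau_o.big_refl)
  thus ?thesis by simp
qed

text \<open>Reciprocals: eventually \<open>|f| \<ge> |g|/2\<close>, so \<open>|1/f - 1/g| \<le> 2 |f - g| / g^2\<close>.\<close>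
lemma approx_inv:
  assumes eps: "eps \<longlonglongrightarrow> 0" and g0: "eventually (\<lambda>n. g n \<noteq> 0) sequentially" and r: "approx eps f g"
  shows "approx eps (\<lambda>n. 1 / f n) (\<lambda>n. 1 / g n)"
proof -
  obtain c where c: "c > 0" and ev: "eventually (\<lambda>n. norm (f n - g n) \<le> c * norm (g n * eps n)) sequentially"
    using r unfolding approx_def by (elim landau_o.bigE) auto
  have "eventually (\<lambda>n. \<bar>eps n\<bar> < 1 / (2 * c)) sequentially"
    using eps c by (intro order_tendstoD) (auto simp: tendsto_rabs_zero_iff intro: tendsto_rabs_zero)
  moreover note ev g0
  ultimately have "eventually (\<lambda>n. norm (1 / f n - 1 / g n) \<le> (2 * c) * norm (1 / g n * eps n)) sequentially"
  proof eventually_elim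
    case (elim n)
    have ce: "c * \<bar>eps n\<bar> \<le> 1/2" using elim(1) c by (simp add: field_simps)
    have fg: "\<bar>f n - g n\<bar> \<le> c * \<bar>g n\<bar> * \<bar>eps n\<bar>" using elim(2) by (simp add: abs_mult mult.assoc)
    also have "\<dots> = \<bar>g n\<bar> * (c * \<bar>eps n\<bar>)" by simp
    also have "\<dots> \<le> \<bar>g n\<bar> * (1/2)" by (rule mult_left_mono[OF ce]) simp
    finally have fg2: "\<bar>f n - g n\<bar> \<le> \<bar>g n\<bar> / 2" by simp
    hence fge: "\<bar>f n\<bar> \<ge> \<bar>g n\<bar> / 2" by linarith
    have gp: "\<bar>g n\<bar> > 0" using elim(3) by simp
    hence fp: "\<bar>f n\<bar> > 0" using fge by linarith
    have "norm (1 / f n - 1 / g n) = \<bar>f n - g n\<bar> / (\<bar>f n\<bar> * \<bar>g n\<bar>)"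
      using gp fp by (simp add: field_simps abs_mult flip: abs_minus_commute)
    also have "\<dots> \<le> (c * \<bar>g n\<bar> * \<bar>eps n\<bar>) / ((\<bar>g n\<bar> / 2) * \<bar>g n\<bar>)"
    proof (rule frac_le)
      show "0 < \<bar>g n\<bar> / 2 * \<bar>g n\<bar>" using gp by (auto simp: zero_less_mult_iff linorder_neq_iff)
      show "\<bar>g n\<bar> / 2 * \<bar>g n\<bar> \<le> \<bar>f n\<bar> * \<bar>g n\<bar>" using fge by (intro mult_right_mono) auto
    qed (use fg c in auto)
    also have "\<dots> = (2 * c) * norm (1 / g n * eps n)"
      using gp by (simp add: field_simps abs_mult)
    finally show ?case .
  qed
  hence "(\<lambda>n. 1 / f n - 1 / g n) \<in> O(\<lambda>n. 1 / g n * eps n)" by (rule bigoI)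
  thus ?thesis unfolding approx_def .
qed

lemma approx_diff_bigo:
  assumes "approx eps f g" "g \<in> O(h)"
  shows "(\<lambda>n. f n - g n) \<in> O(\<lambda>n. h n * eps n)"
proof -
  have "(\<lambda>n. f n - g n) \<in> O(\<lambda>n. g n * eps n)" using assms(1) unfolding approx_def .
  also have "(\<lambda>n. g n * eps n) \<in> O(\<lambda>n. h n * eps n)" by (rule landau_o.big.mult_right[OF assms(2)])
  finally show ?thesis .
qed

lemma approxI_bound:
  assumes "eventually (\<lambda>n. \<bar>f n - g n\<bar> \<le> c * \<bar>g n * eps n\<bar>) sequentially"
  shows "approx eps f g"
  unfolding approx_def by (rule bigoI[of _ c]) (use assms in simp)


lemma choose_prod: "real (a choose j) = (\<Prod>i<j. real a - real i) / fact j"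
  by (simp add: binomial_gbinomial gbinomial_prod_rev atLeast0LessThan)

lemma real_n_big: "eventually (\<lambda>n. c \<le> real n) sequentially"
proof -
  have "eventually (\<lambda>n. nat \<lceil>c\<rceil> \<le> n) sequentially" by (rule eventually_ge_at_top)
  thus ?thesis by eventually_elim linarith
qed

text \<open>The power bookkeeping behind \<open>m p_{A+e} T^e / n^e \<sim> \<mu> \<tau>^e u \<dots>\<close>: with
  \<open>x = n\<close>, \<open>y = u\<close>, all powers of \<open>n\<close> cancel and exactly one power of \<open>u\<close> survives.\<close>
lemma main_coefficient_identity:
  fixes x y \<mu> :: real
  assumes x: "x > 0" and y: "y > 0" and K: "K = A + e + a" and R: "e + a = Suc R"
  shows "\<mu> * x ^ (e + a) / y ^ R * ((x ^ (A + e) / fact (A + e)) * (y ^ (K - (A + e)) / fact (K - (A + e)))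
           * (1 / (x ^ K / fact K))) * (Z / fact e) * (1 / x ^ e)
       = \<mu> * (Z / y ^ e) * y * fact K / (fact (A + e) * fact a * fact e)"
proof -
  have Ka: "K - (A + e) = a" using K by simp
  have xx: "x ^ (e + a) * x ^ (A + e) = x ^ K * x ^ e" unfolding K by (simp add: power_add[symmetric] algebra_simps)
  have yy: "y ^ a * y ^ e = y ^ R * y" using R by (simp add: power_add[symmetric] add.commute)
  have "\<mu> * x ^ (e + a) / y ^ R * ((x ^ (A + e) / fact (A + e)) * (y ^ a / fact a)
           * (1 / (x ^ K / fact K))) * (Z / fact e) * (1 / x ^ e)
       = \<mu> * (x ^ (e + a) * x ^ (A + e)) / (x ^ K * x ^ e) * (y ^ a * y ^ e) / (y ^ R * y ^ e) * Z * fact K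
          / (fact (A + e) * fact a * fact e)"
    using x y by (simp add: field_simps)
  also have "\<dots> = \<mu> * (y ^ R * y) / (y ^ R * y ^ e) * Z * fact K / (fact (A + e) * fact a * fact e)"
    unfolding xx yy using x by simp
  also have "\<dots> = \<mu> * (Z / y ^ e) * y * fact K / (fact (A + e) * fact a * fact e)"
    using y by (simp add: field_simps)
  finally show ?thesis unfolding Ka .
qed

text \<open>The analogous bookkeeping for \<open>m p_j\<close> with \<open>j < A\<close>: an extra factor \<open>(u/n)^{A-j}\<close>.\<close>
lemma minor_coefficient_identity:
  fixes x y :: real
  assumes x: "x > 0" and y: "y > 0" and K: "K = j + b + R1" and R: "R1 = Suc R"
  shows "x ^ R1 / y ^ R * (x ^ j * y ^ (K - j) / x ^ K) = y * (y / x) ^ b"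
proof -
  have Kj: "K - j = R1 + b" using K by simp
  have "x ^ R1 / y ^ R * (x ^ j * y ^ (R1 + b) / x ^ K) = (x ^ R1 * x ^ j / x ^ K) * (y ^ (Suc R + b) / y ^ R)"
    using R by (simp add: field_simps)
  also have "x ^ R1 * x ^ j / x ^ K = 1 / x ^ b" unfolding K using x by (simp add: power_add field_simps)
  also have "y ^ (Suc R + b) / y ^ R = y * y ^ b" using y by (simp add: power_add field_simps)
  finally show ?thesis unfolding Kj by (simp add: power_divide field_simps)
qed

lemma ratio_perturbation:
  fixes N nn G j :: real
  assumes "nn / 2 \<le> N" "N \<le> nn" "nn - N \<le> G" "0 < nn" "0 \<le> j"
  shows "\<bar>j / N\<bar> \<le> 2 * j / nn" and "\<bar>j / N - j / nn\<bar> \<le> j * (2 * G / nn) / nn"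
proof -
  have N: "0 < N" using assms by linarith
  have "j / N \<le> j / (nn / 2)" using assms N by (intro divide_left_mono) auto
  thus "\<bar>j / N\<bar> \<le> 2 * j / nn" using N assms by (simp add: mult.commute)
  have eq: "j / N - j / nn = j * (nn - N) / (N * nn)" using N assms by (simp add: field_simps)
  have "0 \<le> j * (nn - N) / (N * nn)" using N assms by simp
  hence "\<bar>j / N - j / nn\<bar> = j * (nn - N) / (N * nn)" unfolding eq by (rule abs_of_nonneg)
  also have "\<dots> \<le> j * G / (nn / 2 * nn)"
    using assms N by (intro frac_le mult_left_mono mult_right_mono) auto
  also have "\<dots> = j * (2 * G / nn) / nn" by (simp add: field_simps)
  finally show "\<bar>j / N - j / nn\<bar> \<le> j * (2 * G / nn) / nn" .
qed

lemma ln_linearisation_bound: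
  fixes M x :: real
  assumes "0 < M" "\<bar>x\<bar> \<le> 1/2"
  shows "\<bar>M * (ln (1 + x) - x)\<bar> \<le> 2 * (M * x)\<^sup>2 / M"
proof -
  have ln: "\<bar>ln (1 + x) - x\<bar> \<le> 2 * x\<^sup>2" by (rule abs_ln_one_plus_x_minus_x_bound) (use assms in simp)
  have "\<bar>M * (ln (1 + x) - x)\<bar> = M * \<bar>ln (1 + x) - x\<bar>" using assms by (simp add: abs_mult)
  also have "\<dots> \<le> M * (2 * x\<^sup>2)" using assms ln by (intro mult_left_mono) auto
  also have "\<dots> = 2 * (M * x)\<^sup>2 / M" using assms by (simp add: power2_eq_square field_simps)
  finally show ?thesis .
qed

lemma dominated_bigo:
  fixes f g h :: "_ \<Rightarrow> real"
  assumes "eventually (\<lambda>n. \<bar>f n\<bar> \<le> h n) F" "h \<in> O[F](g)"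
  shows "f \<in> O[F](g)"
proof -
  have "f \<in> O[F](h)" by (rule bigoI[of _ 1]) (use assms(1) in \<open>auto elim: eventually_mono\<close>)
  thus ?thesis using assms(2) by (rule landau_o.big_trans)
qed

section \<open>Asymptotic analysis in the setting of the theorem\<close>

text \<open>Notation: \<open>A = k-r+1\<close>, \<open>U n = u(n)\<close>, \<open>T_n = \<lfloor>\<tau> U\<rfloor>\<close> and \<open>\<epsilon> n = 1/U + U/n\<close>; note that
  \<open>U \<epsilon> = 1 + U^2/n\<close> is comparable to the target error \<open>max(1, U^2/n)\<close>.\<close>
locale mgf_setting =
  fixes k r :: nat and u :: "nat \<Rightarrow> nat" and \<mu> \<tau> lam :: real and m :: "nat \<Rightarrow> nat"
  assumes r2: "2 \<le> r" and rk: "r \<le> k"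
    and ut: "filterlim u at_top sequentially"
    and un: "(\<lambda>n. real (u n) / real n) \<longlonglongrightarrow> 0"
    and \<mu>0: "\<mu> > 0" and \<tau>0: "\<tau> > 0"
    and mdef: "\<And>n. m n = nat \<lfloor>\<mu> * real n ^ (r-1) / real (u n) ^ (r-2)\<rfloor>"
begin

definition "A = k - r + 1"
definition "U n = real (u n)"
definition "Tn n = nat \<lfloor>\<tau> * U n\<rfloor>"
definition "eps n = 1 / U n + U n / real n"
definition "yA = exp (lam * real A)"

lemma A_le_k: "A \<le> k" and k_minus_A: "k - A = r - 1" and A_plus: "A + (r - 1) = k"
  using r2 rk unfolding A_def by auto

lemma U_over_n_small: "d > 0 \<Longrightarrow> eventually (\<lambda>n. U n / real n < d) sequentially"
  using un unfolding U_def by (rule order_tendstoD)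

definition good :: "nat \<Rightarrow> bool" where
  "good n \<longleftrightarrow> 1 \<le> U n \<and> 2 \<le> \<tau> * U n \<and> 2 * (1 + \<tau>) * U n \<le> real n \<and> 2 * real k \<le> real n
     \<and> 1 \<le> real n \<and> 2 \<le> \<mu> * real n"

lemma eventually_good: "eventually good sequentially"
proof -
  have "eventually (\<lambda>n. nat \<lceil>max 1 (2 / \<tau>)\<rceil> \<le> u n) sequentially"
    using ut unfolding filterlim_at_top by blast
  hence a: "eventually (\<lambda>n. max 1 (2 / \<tau>) \<le> U n) sequentially"
    unfolding U_def by eventually_elim linarith
  have b: "eventually (\<lambda>n. U n / real n < 1 / (2 * (1 + \<tau>))) sequentially"
    by (rule U_over_n_small) (use \<tau>0 in simp)
  have c: "eventually (\<lambda>n. max (2 * real k) (max 1 (2 / \<mu>)) \<le> real n) sequentially"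
    by (rule real_n_big)
  show ?thesis using a b c
  proof eventually_elim
    case (elim n)
    have n1: "1 \<le> real n" using elim(3) by simp
    have "\<tau> * (2 / \<tau>) \<le> \<tau> * U n" using elim(1) \<tau>0 by (intro mult_left_mono) auto
    hence "2 \<le> \<tau> * U n" using \<tau>0 by simp
    moreover have "2 * (1 + \<tau>) * U n \<le> real n" using elim(2) n1 \<tau>0 by (simp add: field_simps)
    moreover have "\<mu> * (2 / \<mu>) \<le> \<mu> * real n" using elim(3) \<mu>0 by (intro mult_left_mono) auto
    ultimately show ?case unfolding good_def using n1 elim(1,3) \<mu>0 by auto
  qed
qed

lemma good_facts:
  assumes g: "good n"
  shows good_u_le: "u n \<le> n" and good_k_le: "k \<le> n" and good_n_pos: "0 < real n"
    and good_U_ge_1: "1 \<le> U n" and good_U_le: "U n \<le> real n"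
    and good_U_small: "2 * (1 + \<tau>) * U n \<le> real n"
    and good_Tn_le: "real (Tn n) \<le> \<tau> * U n" and good_Tn_gt: "\<tau> * U n - 1 < real (Tn n)"
    and good_Tn_ge_1: "1 \<le> Tn n" and good_Tn_ge_half: "\<tau> * U n / 2 \<le> real (Tn n)"
    and good_Nt_ge: "\<And>t. t < Tn n \<Longrightarrow> real n / 2 \<le> Nt n (u n) t"
    and good_Nt_gap: "\<And>t. t < Tn n \<Longrightarrow> real n - Nt n (u n) t \<le> U n + real (Tn n)"
proof -
  from g have U1: "1 \<le> U n" and tU: "2 \<le> \<tau> * U n" and Un: "2 * (1 + \<tau>) * U n \<le> real n"
    and kn: "2 * real k \<le> real n" and n1: "1 \<le> real n" unfolding good_def by auto
  show "1 \<le> U n" "2 * (1 + \<tau>) * U n \<le> real n" "k \<le> n" "0 < real n" using U1 Un kn n1 by auto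
  have split: "2 * (1 + \<tau>) * U n = 2 * U n + 2 * (\<tau> * U n)" by (simp add: algebra_simps)
  show UU: "U n \<le> real n" using Un U1 tU split by linarith
  thus "u n \<le> n" unfolding U_def by simp
  have fl: "real (Tn n) = of_int \<lfloor>\<tau> * U n\<rfloor>" unfolding Tn_def using tU by simp
  show T1: "real (Tn n) \<le> \<tau> * U n" unfolding fl by simp
  show T2: "\<tau> * U n - 1 < real (Tn n)" unfolding fl by linarith
  show "1 \<le> Tn n" "\<tau> * U n / 2 \<le> real (Tn n)" using T2 tU by simp_all
  fix t assume t: "t < Tn n"
  have gap: "real n - Nt n (u n) t = U n + real t" unfolding Nt_def U_def by simp
  thus "real n - Nt n (u n) t \<le> U n + real (Tn n)" using t by simp
  show "real n / 2 \<le> Nt n (u n) t" using gap t T1 Un U1 tU split by linarith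
qed

lemma good_eps:
  assumes g: "good n"
  shows good_eps_pos: "0 < eps n" and good_Ueps_eq: "U n * eps n = 1 + U n ^ 2 / real n"
    and good_Ueps_ge_1: "1 \<le> U n * eps n"
    and good_U_le_neps: "U n \<le> real n * eps n" and good_neps_ge_1: "1 \<le> real n * eps n"
proof -
  note n = good_n_pos[OF g] and U = good_U_ge_1[OF g] good_U_le[OF g]
  show e: "U n * eps n = 1 + U n ^ 2 / real n"
    unfolding eps_def using U by (simp add: field_simps power2_eq_square)
  show "0 < eps n" unfolding eps_def using n U by (intro add_pos_pos) auto
  show "1 \<le> U n * eps n" unfolding e using n by simp
  have ne: "real n * eps n = real n / U n + U n" unfolding eps_def using n by (simp add: field_simps)
  have "1 \<le> real n / U n" using U by simp
  thus "U n \<le> real n * eps n" "1 \<le> real n * eps n" unfolding ne using U by linarith+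
qed

lemma eps_lim: "eps \<longlonglongrightarrow> 0"
proof -
  have "filterlim U at_top sequentially"
    unfolding U_def by (rule filterlim_compose[OF filterlim_real_sequentially ut])
  hence "(\<lambda>n. inverse (U n)) \<longlonglongrightarrow> 0" by (rule tendsto_inverse_0_at_top)
  hence "(\<lambda>n. 1 / U n + U n / real n) \<longlonglongrightarrow> 0 + 0"
    using un unfolding U_def by (intro tendsto_add) (auto simp: divide_inverse)
  thus ?thesis unfolding eps_def by simp
qed

text \<open>The dual iteration runs backwards in time: its \<open>s\<close>-th step uses \<open>q_j = j / N(T_n - 1 - s)\<close>.\<close>
definition "x_init = (\<lambda>j. if j = A then yA else 1)"
definition "q_rev n s j = real j / Nt n (u n) (Tn n - Suc s)"
definition "eta n = 2 * (U n + real (Tn n)) / real n"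
definition "z n j = (if j \<le> A then exp (lam * real j) else dual_iter A k (q_rev n) x_init (Tn n) j)"
definition "S n = (\<Sum>j\<le>k. pj k n (u n) j * z n j)"

lemma good_dual_regime:
  assumes g: "good n"
  shows "dual_regime A k (real n) (Tn n) (eta n) (q_rev n) x_init yA"
proof -
  have Tn_le: "real (Tn n) \<le> real n"
    using good_Tn_le[OF g] good_U_small[OF g] good_U_ge_1[OF g] \<tau>0 by (simp add: algebra_simps)
  have "\<bar>q_rev n s j\<bar> \<le> 2 * real j / real n \<and> \<bar>q_rev n s j - real j / real n\<bar> \<le> real j * eta n / real n"
    if s: "s < Tn n" for s j
  proof -
    have t: "Tn n - Suc s < Tn n" using s by simp
    have "\<bar>real j / Nt n (u n) (Tn n - Suc s) - real j / real n\<bar>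
        \<le> real j * (2 * (U n + real (Tn n)) / real n) / real n"
      by (rule ratio_perturbation(2)) (use good_Nt_ge[OF g t] good_Nt_gap[OF g t] good_n_pos[OF g]
          in \<open>auto simp: Nt_def\<close>)
    moreover have "\<bar>real j / Nt n (u n) (Tn n - Suc s)\<bar> \<le> 2 * real j / real n"
      by (rule ratio_perturbation(1)) (use good_Nt_ge[OF g t] good_n_pos[OF g] in \<open>auto simp: Nt_def\<close>)
    ultimately show ?thesis unfolding q_rev_def eta_def by simp
  qed
  thus ?thesis unfolding dual_regime_def
    using good_n_pos[OF g] good_Tn_ge_1[OF g] Tn_le good_U_ge_1[OF g] by (auto simp: x_init_def eta_def)
qed

lemma good_chain_mgf:
  assumes g: "good n"
  shows "measure_pmf.expectation (chain_pmf k r n (u n) (m n) (Tn n)) (\<lambda>(E, C). exp (lam * real_of_int E))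
       = exp (-lam * real (Tn n)) * S n ^ m n"
proof -
  have q: "0 \<le> real j / Nt n (u n) t \<and> real j / Nt n (u n) t \<le> 1" if "t < Tn n" "j \<in> {A+1..k}" for t j
  proof -
    have N2: "real n / 2 \<le> Nt n (u n) t" using good_Nt_ge[OF g that(1)] .
    moreover have "real j \<le> real n / 2" using that(2) g unfolding good_def by auto
    ultimately show ?thesis using good_n_pos[OF g] by simp
  qed
  have x: "(\<lambda>j. if j = A then exp (lam * real A) else 1) = x_init"
    unfolding x_init_def yA_def by simp
  have q_rev: "(\<lambda>s j. real j / Nt n (u n) (Tn n - Suc s)) = q_rev n"
    by (simp add: q_rev_def fun_eq_iff)
  show ?thesis
    using chain_mgf_exact[OF A_def good_u_le[OF g] good_k_le[OF g] r2 rk, of "Tn n" "m n" lam] q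
    unfolding x q_rev S_def z_def by (auto simp: A_def)
qed


lemma approx_shifted_n_U: "approx eps (\<lambda>n. real n - U n - real i) (\<lambda>n. real n)"
proof (rule approxI_bound[of _ _ "1 + real i"])
  show "eventually (\<lambda>n. \<bar>real n - U n - real i - real n\<bar> \<le> (1 + real i) * \<bar>real n * eps n\<bar>) sequentially"
    using eventually_good
  proof eventually_elim
    case (elim n)
    have "real i * 1 \<le> real i * (real n * eps n)" using good_neps_ge_1[OF elim] by (intro mult_left_mono) auto
    thus ?case using good_U_le_neps[OF elim] good_eps_pos[OF elim] good_n_pos[OF elim] good_U_ge_1[OF elim]
      by (simp add: algebra_simps)
  qed
qed

lemma approx_shifted_n: "approx eps (\<lambda>n. real n - real i) (\<lambda>n. real n)"
proof (rule approxI_bound[of _ _ "real i"])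
  show "eventually (\<lambda>n. \<bar>real n - real i - real n\<bar> \<le> real i * \<bar>real n * eps n\<bar>) sequentially"
    using eventually_good
  proof eventually_elim
    case (elim n)
    have "real i * 1 \<le> real i * (real n * eps n)" using good_neps_ge_1[OF elim] by (intro mult_left_mono) auto
    thus ?case using good_eps_pos[OF elim] good_n_pos[OF elim] by simp
  qed
qed

lemma approx_shifted_U: "approx eps (\<lambda>n. U n - real i) (\<lambda>n. U n)"
proof (rule approxI_bound[of _ _ "real i"])
  show "eventually (\<lambda>n. \<bar>U n - real i - U n\<bar> \<le> real i * \<bar>U n * eps n\<bar>) sequentially"
    using eventually_good
  proof eventually_elim
    case (elim n)
    have "real i * 1 \<le> real i * (U n * eps n)" using good_Ueps_ge_1[OF elim] by (intro mult_left_mono) auto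
    thus ?case using good_eps_pos[OF elim] good_U_ge_1[OF elim] by simp
  qed
qed

lemma approx_shifted_Tn: "approx eps (\<lambda>n. real (Tn n) - real i) (\<lambda>n. \<tau> * U n)"
proof (rule approxI_bound[of _ _ "(1 + real i) / \<tau>"])
  show "eventually (\<lambda>n. \<bar>real (Tn n) - real i - \<tau> * U n\<bar> \<le> (1 + real i) / \<tau> * \<bar>\<tau> * U n * eps n\<bar>) sequentially"
    using eventually_good
  proof eventually_elim
    case (elim n)
    have "\<bar>real (Tn n) - real i - \<tau> * U n\<bar> \<le> 1 + real i"
      using good_Tn_le[OF elim] good_Tn_gt[OF elim] by linarith
    also have "\<dots> \<le> (1 + real i) * (U n * eps n)"
      using mult_left_mono[OF good_Ueps_ge_1[OF elim], of "1 + real i"] by simp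
    also have "\<dots> = (1 + real i) / \<tau> * \<bar>\<tau> * U n * eps n\<bar>"
      using good_eps_pos[OF elim] good_U_ge_1[OF elim] \<tau>0 by (simp add: abs_mult)
    finally show ?case .
  qed
qed

definition "m_approx n = \<mu> * real n ^ (r-1) / U n ^ (r-2)"

lemma good_m_approx_ge:
  assumes g: "good n"
  shows "\<mu> * real n \<le> m_approx n" and "\<bar>real (m n) - m_approx n\<bar> \<le> 1"
proof -
  note U = good_U_ge_1[OF g] good_U_le[OF g]
  have r1: "r - 1 = Suc (r - 2)" using r2 by simp
  have eq: "m_approx n = \<mu> * real n * (real n / U n) ^ (r - 2)"
    unfolding m_approx_def r1 using U by (simp add: power_divide)
  have "1 \<le> (real n / U n) ^ (r - 2)" using U by (intro one_le_power) simp
  hence "\<mu> * real n * 1 \<le> \<mu> * real n * (real n / U n) ^ (r - 2)"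
    using \<mu>0 good_n_pos[OF g] by (intro mult_left_mono) auto
  thus "\<mu> * real n \<le> m_approx n" unfolding eq by simp
  hence "0 \<le> m_approx n" using \<mu>0 good_n_pos[OF g] by (smt (verit) mult_pos_pos)
  moreover have "m n = nat \<lfloor>m_approx n\<rfloor>" unfolding mdef m_approx_def U_def by simp
  ultimately show "\<bar>real (m n) - m_approx n\<bar> \<le> 1" by linarith
qed

lemma approx_m: "approx eps (\<lambda>n. real (m n)) m_approx"
proof (rule approxI_bound[of _ _ "1 / \<mu>"])
  show "eventually (\<lambda>n. \<bar>real (m n) - m_approx n\<bar> \<le> 1 / \<mu> * \<bar>m_approx n * eps n\<bar>) sequentially"
    using eventually_good
  proof eventually_elim
    case (elim n)
    have "\<mu> \<le> \<mu> * (real n * eps n)"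
      using mult_left_mono[OF good_neps_ge_1[OF elim], of \<mu>] \<mu>0 by simp
    also have "\<dots> \<le> m_approx n * eps n"
      using good_m_approx_ge(1)[OF elim] good_eps_pos[OF elim] by (simp add: mult.assoc[symmetric])
    finally have "1 \<le> 1 / \<mu> * \<bar>m_approx n * eps n\<bar>" using \<mu>0 by (simp add: field_simps)
    thus ?case using good_m_approx_ge(2)[OF elim] by linarith
  qed
qed


lemma approx_choose:
  assumes shift: "\<And>i. approx eps (\<lambda>n. a n - real i) b"
    and N: "eventually (\<lambda>n. real (N n) = a n) sequentially"
  shows "approx eps (\<lambda>n. real (N n choose j)) (\<lambda>n. b n ^ j / fact j)"
proof -
  have "approx eps (\<lambda>n. \<Prod>i<j. a n - real i) (\<lambda>n. \<Prod>i<j. b n)"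
    by (rule approx_prod[OF eps_lim]) (use shift in auto)
  hence "approx eps (\<lambda>n. 1 / fact j * (\<Prod>i<j. a n - real i)) (\<lambda>n. 1 / fact j * (\<Prod>i<j. b n))"
    by (rule approx_cmult)
  moreover have "eventually (\<lambda>n. 1 / fact j * (\<Prod>i<j. a n - real i) = real (N n choose j)) sequentially"
    using N by eventually_elim (simp add: choose_prod)
  ultimately show ?thesis by (rule approx_cong[rotated 2]) auto
qed

definition "p_approx j n = (real n ^ j / fact j) * (U n ^ (k - j) / fact (k - j)) / (real n ^ k / fact k)"

text \<open>\<open>p_j(n) \<approx> \<binom>{k}{j} (U/n)^{k-j}\<close>, written as a quotient of the three leading terms.\<close>
lemma approx_p: "approx eps (\<lambda>n. pj k n (u n) j) (p_approx j)"
proof -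
  have n_u: "approx eps (\<lambda>n. real ((n - u n) choose j)) (\<lambda>n. real n ^ j / fact j)"
    by (rule approx_choose[OF approx_shifted_n_U])
      (use eventually_good in \<open>eventually_elim, use good_u_le in \<open>simp add: U_def\<close>\<close>)
  have u: "approx eps (\<lambda>n. real (u n choose (k - j))) (\<lambda>n. U n ^ (k - j) / fact (k - j))"
    by (rule approx_choose[OF approx_shifted_U]) (simp add: U_def)
  have n: "approx eps (\<lambda>n. 1 / real (n choose k)) (\<lambda>n. 1 / (real n ^ k / fact k))"
  proof (rule approx_inv[OF eps_lim _ approx_choose[OF approx_shifted_n]])
    show "eventually (\<lambda>n. real n ^ k / fact k \<noteq> 0) sequentially"
      using eventually_good by eventually_elim (use good_n_pos in auto)
  qed simp
  have "approx eps (\<lambda>n. real ((n - u n) choose j) * real (u n choose (k - j)) * (1 / real (n choose k)))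
      (\<lambda>n. (real n ^ j / fact j) * (U n ^ (k - j) / fact (k - j)) * (1 / (real n ^ k / fact k)))"
    by (intro approx_mult[OF eps_lim] n_u u n)
  thus ?thesis by (rule approx_cong[rotated 2]) (simp_all add: pj_def p_approx_def)
qed

lemma m_p_approx_eq:
  assumes g: "good n" and e: "e \<le> r - 1"
  shows "m_approx n * p_approx (A + e) n * (Z / fact e) * (1 / real n ^ e)
       = \<mu> * (Z / U n ^ e) * U n * fact k / (fact (A + e) * fact (r - 1 - e) * fact e)"
proof -
  have K: "k = A + e + (r - 1 - e)" using e A_plus by simp
  have R: "e + (r - 1 - e) = Suc (r - 2)" using e r2 by simp
  have R1: "e + (r - 1 - e) = r - 1" using e by simp
  have "\<mu> * real n ^ (e + (r - 1 - e)) / U n ^ (r - 2) * ((real n ^ (A + e) / fact (A + e)) *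
        (U n ^ (k - (A + e)) / fact (k - (A + e))) * (1 / (real n ^ k / fact k))) * (Z / fact e) * (1 / real n ^ e)
       = \<mu> * (Z / U n ^ e) * U n * fact k / (fact (A + e) * fact (r - 1 - e) * fact e)"
    by (rule main_coefficient_identity[OF good_n_pos[OF g] _ K R]) (use good_U_ge_1[OF g] in simp)
  thus ?thesis unfolding m_approx_def p_approx_def R1 by simp
qed

lemma approx_main:
  assumes e: "e \<le> r - 1"
  shows "approx eps (\<lambda>n. real (m n) * pj k n (u n) (A + e) * real (Tn n choose e) * (1 / real n ^ e))
           (\<lambda>n. \<mu> * \<tau> ^ e * U n * fact k / (fact (A + e) * fact (r - 1 - e) * fact e))"
proof -
  have T: "approx eps (\<lambda>n. real (Tn n choose e)) (\<lambda>n. (\<tau> * U n) ^ e / fact e)"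
    by (rule approx_choose[OF approx_shifted_Tn]) simp
  have R: "approx eps (\<lambda>n. real (m n) * pj k n (u n) (A + e) * real (Tn n choose e) * (1 / real n ^ e))
           (\<lambda>n. m_approx n * p_approx (A + e) n * ((\<tau> * U n) ^ e / fact e) * (1 / real n ^ e))"
    by (intro approx_mult[OF eps_lim] approx_m approx_p T approx_refl)
  have E: "eventually (\<lambda>n. m_approx n * p_approx (A + e) n * ((\<tau> * U n) ^ e / fact e) * (1 / real n ^ e)
      = \<mu> * \<tau> ^ e * U n * fact k / (fact (A + e) * fact (r - 1 - e) * fact e)) sequentially"
    using eventually_good
  proof eventually_elim
    case (elim n)
    have "(\<tau> * U n) ^ e / U n ^ e = \<tau> ^ e" using good_U_ge_1[OF elim] by (simp add: power_mult_distrib)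
    thus ?case unfolding m_p_approx_eq[OF elim e] by simp
  qed
  show ?thesis by (rule approx_cong[OF _ E R]) simp
qed

lemma m_p_T_power_bigo:
  assumes e: "e \<le> r - 1"
  shows "(\<lambda>n. real (m n) * pj k n (u n) (A + e) * real (Tn n) ^ e * (1 / real n ^ e)) \<in> O(U)"
proof -
  have T: "approx eps (\<lambda>n. real (Tn n) ^ e) (\<lambda>n. (fact e * (\<tau> * U n) ^ e) / fact e)"
    using approx_pow[OF eps_lim approx_shifted_Tn[of 0]] by simp
  have R: "approx eps (\<lambda>n. real (m n) * pj k n (u n) (A + e) * real (Tn n) ^ e * (1 / real n ^ e))
           (\<lambda>n. m_approx n * p_approx (A + e) n * ((fact e * (\<tau> * U n) ^ e) / fact e) * (1 / real n ^ e))"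
    by (intro approx_mult[OF eps_lim] approx_m approx_p T approx_refl)
  have E: "eventually (\<lambda>n. m_approx n * p_approx (A + e) n * ((fact e * (\<tau> * U n) ^ e) / fact e) * (1 / real n ^ e)
      = (\<mu> * \<tau> ^ e * fact k / (fact (A + e) * fact (r - 1 - e))) * U n) sequentially"
    using eventually_good
  proof eventually_elim
    case (elim n)
    have "(fact e * (\<tau> * U n) ^ e) / U n ^ e = fact e * \<tau> ^ e"
      using good_U_ge_1[OF elim] by (simp add: power_mult_distrib)
    thus ?case unfolding m_p_approx_eq[OF elim e] by simp
  qed
  have "approx eps (\<lambda>n. real (m n) * pj k n (u n) (A + e) * real (Tn n) ^ e * (1 / real n ^ e))
      (\<lambda>n. (\<mu> * \<tau> ^ e * fact k / (fact (A + e) * fact (r - 1 - e))) * U n)"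
    by (rule approx_cong[OF _ E R]) simp
  from approx_bigo[OF eps_lim this] show ?thesis
    by (rule landau_o.big_trans) simp
qed


text \<open>The relative error \<open>X = \<eta> + T/n + 1/T\<close> of the dual estimate is \<open>O(\<epsilon>)\<close>.\<close>
definition "X n = eta n + real (Tn n) / real n + 1 / real (Tn n)"

lemma X_bigo: "X \<in> O(eps)"
proof (rule bigoI[of _ "2 * (1 + \<tau>) + \<tau> + 2 / \<tau>"])
  show "eventually (\<lambda>n. norm (X n) \<le> (2 * (1 + \<tau>) + \<tau> + 2 / \<tau>) * norm (eps n)) sequentially"
    using eventually_good
  proof eventually_elim
    case (elim n)
    note n0 = good_n_pos[OF elim] and U1 = good_U_ge_1[OF elim]
    have e1: "eta n \<le> 2 * (1 + \<tau>) * (U n / real n)"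
      unfolding eta_def using good_Tn_le[OF elim] n0 by (simp add: field_simps)
    have e2: "real (Tn n) / real n \<le> \<tau> * (U n / real n)"
      using good_Tn_le[OF elim] n0 by (simp add: field_simps)
    have e3: "1 / real (Tn n) \<le> 2 / \<tau> * (1 / U n)"
    proof -
      have "1 / real (Tn n) \<le> 1 / (\<tau> * U n / 2)"
        using good_Tn_ge_half[OF elim] good_Tn_ge_1[OF elim] \<tau>0 U1 by (intro divide_left_mono) auto
      thus ?thesis using \<tau>0 U1 by (simp add: field_simps)
    qed
    have "U n / real n \<le> eps n" "1 / U n \<le> eps n" unfolding eps_def using U1 n0 by auto
    hence "X n \<le> 2 * (1 + \<tau>) * eps n + \<tau> * eps n + 2 / \<tau> * eps n"
      unfolding X_def using e1 e2 e3 \<tau>0 by (smt (verit, best) divide_pos_pos mult_left_mono)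
    moreover have "0 \<le> X n" unfolding X_def eta_def using U1 n0 by simp
    ultimately show ?case using good_eps_pos[OF elim] by (simp add: algebra_simps)
  qed
qed

lemma dual_error_bound:
  assumes e: "e \<le> r - 1"
  obtains K where "0 \<le> K" and "eventually (\<lambda>n.
      \<bar>dual_iter A k (q_rev n) x_init (Tn n) (A + e) - 1 - dual_leading A yA (real n) e (Tn n)\<bar>
        \<le> K * (real (Tn n) / real n) ^ e * X n) sequentially"
proof -
  have "A + e \<le> k" using e A_plus by simp
  from dual_iter_estimate[OF this, of yA] obtain B K where K: "0 \<le> K" and est:
    "\<And>nn T eta q x s. dual_regime A k nn T eta q x yA \<Longrightarrow> s \<le> T \<Longrightarrow>
       \<bar>dual_iter A k q x s (A+e) - 1 - dual_leading A yA nn e s\<bar>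
         \<le> real s * K * (T/nn)^e * (eta + T/nn + 1/T) / T"
    by blast
  show ?thesis
  proof (rule that[OF K])
    show "eventually (\<lambda>n.
      \<bar>dual_iter A k (q_rev n) x_init (Tn n) (A + e) - 1 - dual_leading A yA (real n) e (Tn n)\<bar>
        \<le> K * (real (Tn n) / real n) ^ e * X n) sequentially"
      using eventually_good
    proof eventually_elim
      case (elim n)
      have "real (Tn n) > 0" using good_Tn_ge_1[OF elim] by simp
      thus ?case using est[OF good_dual_regime[OF elim] order.refl] unfolding X_def by simp
    qed
  qed
qed

lemma z_dual_iter: "z n (A + e) = dual_iter A k (q_rev n) x_init (Tn n) (A + e)"
  by (cases e) (auto simp: z_def dual_iter_at_A x_init_def yA_def)

text \<open>The main term contributed by the cells \<open>j = A + e\<close>; summed over \<open>e\<close> it gives \<open>(\<phi> + \<lambda>\<tau>) U\<close>.\<close>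
definition "main_term e n = \<mu> * (yA - 1) * real (k choose A) * real ((r - 1) choose e) * \<tau> ^ e * U n"

lemma leading_contribution:
  assumes e: "e \<le> r - 1"
  shows "(\<lambda>n. real (m n) * pj k n (u n) (A + e) * dual_leading A yA (real n) e (Tn n) - main_term e n)
           \<in> O(\<lambda>n. U n * eps n)"
proof -
  define c where "c = \<mu> * \<tau> ^ e * fact k / (fact (A + e) * fact (r - 1 - e) * fact e)"
  define c' where "c' = (yA - 1) * (fact (A + e) / fact A)"
  have "approx eps (\<lambda>n. real (m n) * pj k n (u n) (A + e) * real (Tn n choose e) * (1 / real n ^ e))
      (\<lambda>n. c * U n)"
    using approx_main[OF e] unfolding c_def by (simp add: field_simps)
  from approx_diff_bigo[OF this, of U]
  have "(\<lambda>n. c' * (real (m n) * pj k n (u n) (A + e) * real (Tn n choose e) * (1 / real n ^ e) - c * U n))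
      \<in> O(\<lambda>n. U n * eps n)"
    by simp
  moreover have ident: "c' * c = \<mu> * (yA - 1) * real (k choose A) * real ((r - 1) choose e) * \<tau> ^ e"
  proof -
    have "real (k choose A) = fact k / (fact A * fact (r - 1))" using binomial_fact[OF A_le_k] k_minus_A by simp
    moreover have "real ((r - 1) choose e) = fact (r - 1) / (fact e * fact (r - 1 - e))"
      using binomial_fact[OF e] by simp
    moreover have "c' * c = \<mu> * (yA - 1) * (fact k / (fact A * fact (r - 1)))
        * (fact (r - 1) / (fact e * fact (r - 1 - e))) * \<tau> ^ e"
      unfolding c'_def c_def by (simp add: field_simps)
    ultimately show ?thesis by simp
  qed
  have "real (m n) * pj k n (u n) (A + e) * dual_leading A yA (real n) e (Tn n) - main_term e n
      = c' * (real (m n) * pj k n (u n) (A + e) * real (Tn n choose e) * (1 / real n ^ e) - c * U n)" for n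
  proof -
    have "real (m n) * pj k n (u n) (A + e) * dual_leading A yA (real n) e (Tn n)
        = c' * (real (m n) * pj k n (u n) (A + e) * real (Tn n choose e) * (1 / real n ^ e))"
      unfolding dual_leading_def c'_def by (simp add: field_simps)
    moreover have "main_term e n = c' * c * U n" unfolding main_term_def ident by simp
    ultimately show ?thesis by (simp add: algebra_simps)
  qed
  ultimately show ?thesis by simp
qed

lemma dual_error_contribution:
  assumes e: "e \<le> r - 1"
  shows "(\<lambda>n. real (m n) * pj k n (u n) (A + e) *
      (dual_iter A k (q_rev n) x_init (Tn n) (A + e) - 1 - dual_leading A yA (real n) e (Tn n)))
    \<in> O(\<lambda>n. U n * eps n)"
proof -
  obtain K where K0: "0 \<le> K" and K: "eventually (\<lambda>n.
      \<bar>dual_iter A k (q_rev n) x_init (Tn n) (A + e) - 1 - dual_leading A yA (real n) e (Tn n)\<bar>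
        \<le> K * (real (Tn n) / real n) ^ e * X n) sequentially"
    using dual_error_bound[OF e] by blast
  define Q where "Q n = real (m n) * pj k n (u n) (A + e) * real (Tn n) ^ e * (1 / real n ^ e)" for n
  have "Q \<in> O(U)" unfolding Q_def by (rule m_p_T_power_bigo[OF e])
  from landau_o.big.mult[OF this X_bigo]
  have QX: "(\<lambda>n. K * (Q n * X n)) \<in> O(\<lambda>n. U n * eps n)" by simp
  show ?thesis
  proof (rule dominated_bigo[OF _ QX])
    show "eventually (\<lambda>n. \<bar>real (m n) * pj k n (u n) (A + e) *
        (dual_iter A k (q_rev n) x_init (Tn n) (A + e) - 1 - dual_leading A yA (real n) e (Tn n))\<bar>
      \<le> K * (Q n * X n)) sequentially"
      using K
    proof eventually_elim
      case (elim n)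
      have mp0: "0 \<le> real (m n) * pj k n (u n) (A + e)" by (simp add: pj_nonneg)
      from mult_left_mono[OF elim this] show ?case
        unfolding Q_def abs_mult using mp0 by (simp add: power_divide mult_ac abs_of_nonneg pj_nonneg)
    qed
  qed
qed

lemma contribution_above_A:
  assumes e: "e \<le> r - 1"
  shows "(\<lambda>n. real (m n) * pj k n (u n) (A + e) * (z n (A + e) - 1) - main_term e n) \<in> O(\<lambda>n. U n * eps n)"
proof -
  have "(\<lambda>n. real (m n) * pj k n (u n) (A + e) * (z n (A + e) - 1) - main_term e n)
      = (\<lambda>n. (real (m n) * pj k n (u n) (A + e) * dual_leading A yA (real n) e (Tn n) - main_term e n)
      + real (m n) * pj k n (u n) (A + e) *
        (dual_iter A k (q_rev n) x_init (Tn n) (A + e) - 1 - dual_leading A yA (real n) e (Tn n)))"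
    unfolding z_dual_iter by (intro ext) (simp add: algebra_simps)
  thus ?thesis
    using sum_in_bigo(1)[OF leading_contribution[OF e] dual_error_contribution[OF e]] by (simp only:)
qed

text \<open>The cells \<open>j < A\<close> are negligible: \<open>m p_j = O(U (U/n)^{A-j})\<close>.\<close>
lemma contribution_below_A:
  assumes j: "j < A"
  shows "(\<lambda>n. real (m n) * pj k n (u n) j * (exp (lam * real j) - 1)) \<in> O(\<lambda>n. U n * eps n)"
proof -
  define C where "C = \<mu> * fact k / (fact j * fact (k - j))"
  have C0: "0 \<le> C" unfolding C_def using \<mu>0 by simp
  have mp: "(\<lambda>n. real (m n) * pj k n (u n) j) \<in> O(\<lambda>n. m_approx n * p_approx j n)"
    by (rule approx_bigo[OF eps_lim approx_mult[OF eps_lim approx_m approx_p]])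
  have "(\<lambda>n. m_approx n * p_approx j n) \<in> O(\<lambda>n. U n * eps n)"
  proof (rule bigoI[of _ C])
    show "eventually (\<lambda>n. norm (m_approx n * p_approx j n) \<le> C * norm (U n * eps n)) sequentially"
      using eventually_good
    proof eventually_elim
      case (elim n)
      note n0 = good_n_pos[OF elim] and U = good_U_ge_1[OF elim] good_U_le[OF elim]
      have K: "k = j + (A - j) + (r - 1)" using j A_plus by simp
      have R: "r - 1 = Suc (r - 2)" using r2 by simp
      have "m_approx n * p_approx j n = C * (real n ^ (r - 1) / U n ^ (r - 2) * (real n ^ j * U n ^ (k - j) / real n ^ k))"
        unfolding m_approx_def p_approx_def C_def by (simp add: field_simps)
      also have "\<dots> = C * (U n * (U n / real n) ^ (A - j))"
        by (subst minor_coefficient_identity[OF n0 _ K R]) (use U in auto)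
      finally have eq: "m_approx n * p_approx j n = C * (U n * (U n / real n) ^ (A - j))" .
      have q0: "0 \<le> U n / real n" "U n / real n \<le> 1" using n0 U by auto
      have "(U n / real n) ^ (A - j) \<le> (U n / real n) ^ 1"
        by (rule power_decreasing) (use j q0 in auto)
      hence "U n * (U n / real n) ^ (A - j) \<le> U n ^ 2 / real n"
        using U mult_left_mono[of "(U n / real n) ^ (A - j)" "U n / real n" "U n"]
        by (simp add: power2_eq_square)
      also have "\<dots> \<le> U n * eps n" unfolding good_Ueps_eq[OF elim] by simp
      finally have "C * (U n * (U n / real n) ^ (A - j)) \<le> C * (U n * eps n)" using C0 by (rule mult_left_mono)
      moreover have "0 \<le> C * (U n * (U n / real n) ^ (A - j))" using C0 q0 U by simp
      ultimately show ?case unfolding eq using good_eps_pos[OF elim] U by simp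
    qed
  qed
  from landau_o.big_trans[OF mp this]
  have "(\<lambda>n. (exp (lam * real j) - 1) * (real (m n) * pj k n (u n) j)) \<in> O(\<lambda>n. U n * eps n)"
    by simp
  thus ?thesis by (simp add: mult.commute)
qed

lemma sum_main_terms: "(\<Sum>e\<le>r-1. main_term e n) = (phi k r \<mu> lam \<tau> + lam * \<tau>) * U n"
proof -
  have "(\<Sum>e\<le>r-1. main_term e n)
      = \<mu> * (yA - 1) * real (k choose A) * U n * (\<Sum>e\<le>r-1. real ((r - 1) choose e) * \<tau> ^ e)"
    unfolding main_term_def sum_distrib_left by (intro sum.cong refl) (simp add: mult_ac)
  also have "(\<Sum>e\<le>r-1. real ((r - 1) choose e) * \<tau> ^ e) = (1 + \<tau>) ^ (r - 1)"
    using binomial_ring[of \<tau> 1 "r - 1"] by (simp add: add.commute)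
  also have "real (k choose A) = real (k choose (r - 1))"
  proof -
    have "k - (r - 1) = A" using A_plus by simp
    thus ?thesis using binomial_symmetric[of "r - 1" k] rk by simp
  qed
  finally show ?thesis unfolding phi_def yA_def A_def by (simp add: algebra_simps)
qed

lemma S_split:
  assumes g: "good n"
  shows "real (m n) * (S n - 1) = (\<Sum>j<A. real (m n) * pj k n (u n) j * (exp (lam * real j) - 1))
     + (\<Sum>e\<le>r-1. real (m n) * pj k n (u n) (A + e) * (z n (A + e) - 1))"
proof -
  have "S n - 1 = (\<Sum>j\<le>k. pj k n (u n) j * (z n j - 1))"
    unfolding S_def using pj_sum[OF good_u_le[OF g] good_k_le[OF g]] by (simp add: algebra_simps sum_subtractf)
  also have "{..k} = {..<A} \<union> {A..k}" using A_le_k by auto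
  also have "(\<Sum>j\<in>{..<A} \<union> {A..k}. pj k n (u n) j * (z n j - 1))
      = (\<Sum>j<A. pj k n (u n) j * (z n j - 1)) + (\<Sum>j\<in>{A..k}. pj k n (u n) j * (z n j - 1))"
    by (rule sum.union_disjoint) auto
  also have "(\<Sum>j\<in>{A..k}. pj k n (u n) j * (z n j - 1)) = (\<Sum>e\<le>r-1. pj k n (u n) (A + e) * (z n (A + e) - 1))"
  proof -
    have "{A..k} = {0 + A..(r - 1) + A}" using A_plus by simp
    hence "(\<Sum>j\<in>{A..k}. pj k n (u n) j * (z n j - 1)) = (\<Sum>e\<in>{0..r-1}. pj k n (u n) (e + A) * (z n (e + A) - 1))"
      by (simp only: sum.shift_bounds_cl_nat_ivl)
    thus ?thesis by (simp add: atLeast0AtMost add.commute)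
  qed
  also have "(\<Sum>j<A. pj k n (u n) j * (z n j - 1)) = (\<Sum>j<A. pj k n (u n) j * (exp (lam * real j) - 1))"
    by (intro sum.cong) (auto simp: z_def)
  finally show ?thesis by (simp add: sum_distrib_left algebra_simps)
qed

definition "S_defect n = real (m n) * (S n - 1) - (phi k r \<mu> lam \<tau> + lam * \<tau>) * U n"

lemma S_defect_bigo: "S_defect \<in> O(\<lambda>n. U n * eps n)"
proof -
  have bound: "(\<lambda>n. (\<Sum>j<A. real (m n) * pj k n (u n) j * (exp (lam * real j) - 1))
      + (\<Sum>e\<le>r-1. real (m n) * pj k n (u n) (A + e) * (z n (A + e) - 1) - main_term e n))
      \<in> O(\<lambda>n. U n * eps n)"
  proof (rule sum_in_bigo(1))
    show "(\<lambda>n. \<Sum>j<A. real (m n) * pj k n (u n) j * (exp (lam * real j) - 1)) \<in> O(\<lambda>n. U n * eps n)"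
      by (rule big_sum_in_bigo) (rule contribution_below_A, simp)
    show "(\<lambda>n. \<Sum>e\<le>r-1. real (m n) * pj k n (u n) (A + e) * (z n (A + e) - 1) - main_term e n)
        \<in> O(\<lambda>n. U n * eps n)"
      by (rule big_sum_in_bigo) (rule contribution_above_A, simp)
  qed
  have "eventually (\<lambda>n. (\<Sum>j<A. real (m n) * pj k n (u n) j * (exp (lam * real j) - 1))
      + (\<Sum>e\<le>r-1. real (m n) * pj k n (u n) (A + e) * (z n (A + e) - 1) - main_term e n) = S_defect n) sequentially"
    using eventually_good
  proof eventually_elim
    case (elim n)
    show ?case unfolding S_defect_def S_split[OF elim] sum_main_terms[symmetric] by (simp add: sum_subtractf)
  qed
  from landau_o.big.in_cong[OF this] bound show ?thesis by simp
qed



lemma Ueps_bigo_U: "(\<lambda>n. U n * eps n) \<in> O(U)"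
proof (rule bigoI[of _ 2])
  show "eventually (\<lambda>n. norm (U n * eps n) \<le> 2 * norm (U n)) sequentially"
    using eventually_good
  proof eventually_elim
    case (elim n)
    note U = good_U_ge_1[OF elim] good_U_le[OF elim]
    have "U n ^ 2 / real n \<le> U n" using good_n_pos[OF elim] U by (simp add: power2_eq_square field_simps)
    thus ?case unfolding good_Ueps_eq[OF elim] using U by simp
  qed
qed

lemma Ueps_bigo_target: "(\<lambda>n. U n * eps n) \<in> O(\<lambda>n. max 1 (real (u n) ^ 2 / real n))"
proof (rule bigoI[of _ 2])
  show "eventually (\<lambda>n. norm (U n * eps n) \<le> 2 * norm (max 1 (real (u n) ^ 2 / real n))) sequentially"
    using eventually_good
  proof eventually_elim
    case (elim n)
    have "1 + U n ^ 2 / real n \<le> 2 * max 1 (U n ^ 2 / real n)" by simp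
    thus ?case using good_Ueps_eq[OF elim] good_eps_pos[OF elim] good_U_ge_1[OF elim] unfolding U_def by simp
  qed
qed

lemma good_m_ge: "good n \<Longrightarrow> \<mu> * real n / 2 \<le> real (m n)"
  using good_m_approx_ge[of n] unfolding good_def by linarith

lemma m_S_bigo: "(\<lambda>n. real (m n) * (S n - 1)) \<in> O(U)"
proof -
  have "(\<lambda>n. S_defect n + (phi k r \<mu> lam \<tau> + lam * \<tau>) * U n) \<in> O(U)"
    using sum_in_bigo(1)[OF landau_o.big_trans[OF S_defect_bigo Ueps_bigo_U], of "\<lambda>n. _ * U n"] by simp
  thus ?thesis by (simp add: S_defect_def)
qed

lemma good_log_S:
  assumes g: "good n" and c: "c > 0" and MS: "\<bar>real (m n) * (S n - 1)\<bar> \<le> c * U n"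
    and small: "U n / real n < \<mu> / (4 * c)"
  shows "\<bar>S n - 1\<bar> \<le> 1/2"
    and "\<bar>real (m n) * (ln (S n) - (S n - 1))\<bar> \<le> (4 * c^2 / \<mu>) * (U n * eps n)"
proof -
  note n0 = good_n_pos[OF g] and U1 = good_U_ge_1[OF g]
  have m: "\<mu> * real n / 2 \<le> real (m n)" by (rule good_m_ge[OF g])
  have mpos: "real (m n) > 0" using m \<mu>0 n0 by (smt (verit) divide_pos_pos mult_pos_pos)
  have "\<bar>S n - 1\<bar> = \<bar>real (m n) * (S n - 1)\<bar> / real (m n)" using mpos by (simp add: abs_mult)
  also have "\<dots> \<le> c * U n / (\<mu> * real n / 2)"
    using MS m mpos \<mu>0 n0 c U1 by (intro frac_le) auto
  also have "\<dots> = (2 * c / \<mu>) * (U n / real n)" using \<mu>0 n0 by (simp add: field_simps)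
  also have "\<dots> \<le> (2 * c / \<mu>) * (\<mu> / (4 * c))" using small c \<mu>0 by (intro mult_left_mono) auto
  also have "\<dots> = 1/2" using c \<mu>0 by (simp add: field_simps)
  finally show half: "\<bar>S n - 1\<bar> \<le> 1/2" .
  have "\<bar>real (m n) * (ln (S n) - (S n - 1))\<bar> \<le> 2 * (real (m n) * (S n - 1))\<^sup>2 / real (m n)"
    using ln_linearisation_bound[OF mpos half] by simp
  also have "\<dots> \<le> 2 * (c * U n)\<^sup>2 / (\<mu> * real n / 2)"
  proof (intro frac_le)
    have "(real (m n) * (S n - 1))\<^sup>2 \<le> (c * U n)\<^sup>2"
      using MS by (metis abs_ge_zero power2_abs power_mono)
    thus "2 * (real (m n) * (S n - 1))\<^sup>2 \<le> 2 * (c * U n)\<^sup>2" by simp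
  qed (use m \<mu>0 n0 in auto)
  also have "\<dots> = (4 * c^2 / \<mu>) * (U n ^ 2 / real n)"
    using \<mu>0 n0 by (simp add: field_simps power_mult_distrib)
  also have "\<dots> \<le> (4 * c^2 / \<mu>) * (U n * eps n)"
    unfolding good_Ueps_eq[OF g] using c \<mu>0 by (intro mult_left_mono) auto
  finally show "\<bar>real (m n) * (ln (S n) - (S n - 1))\<bar> \<le> (4 * c^2 / \<mu>) * (U n * eps n)" .
qed

lemma log_S_linearisation:
  shows "eventually (\<lambda>n. \<bar>S n - 1\<bar> \<le> 1/2) sequentially"
    and "(\<lambda>n. real (m n) * (ln (S n) - (S n - 1))) \<in> O(\<lambda>n. U n * eps n)"
proof -
  obtain c where c: "c > 0"
    and cb: "eventually (\<lambda>n. norm (real (m n) * (S n - 1)) \<le> c * norm (U n)) sequentially"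
    using m_S_bigo by (elim landau_o.bigE) auto
  have small: "eventually (\<lambda>n. U n / real n < \<mu> / (4 * c)) sequentially"
    by (rule U_over_n_small) (use \<mu>0 c in simp)
  have key: "eventually (\<lambda>n. good n \<and> \<bar>S n - 1\<bar> \<le> 1/2 \<and>
      \<bar>real (m n) * (ln (S n) - (S n - 1))\<bar> \<le> (4 * c^2 / \<mu>) * (U n * eps n)) sequentially"
    using eventually_good cb small
  proof eventually_elim
    case (elim n)
    have "\<bar>real (m n) * (S n - 1)\<bar> \<le> c * U n" using elim(2) good_U_ge_1[OF elim(1)] by simp
    from good_log_S[OF elim(1) c this elim(3)] show ?case using elim(1) by simp
  qed
  thus "eventually (\<lambda>n. \<bar>S n - 1\<bar> \<le> 1/2) sequentially" by (rule eventually_mono) simp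
  show "(\<lambda>n. real (m n) * (ln (S n) - (S n - 1))) \<in> O(\<lambda>n. U n * eps n)"
  proof (rule bigoI[of _ "4 * c^2 / \<mu>"])
    show "eventually (\<lambda>n. norm (real (m n) * (ln (S n) - (S n - 1))) \<le> 4 * c^2 / \<mu> * norm (U n * eps n)) sequentially"
      using key
    proof eventually_elim
      case (elim n)
      thus ?case using good_eps_pos[of n] good_U_ge_1[of n] by simp
    qed
  qed
qed

lemma Tn_rounding: "(\<lambda>n. -lam * (real (Tn n) - \<tau> * U n)) \<in> O(\<lambda>n. U n * eps n)"
proof (rule bigoI[of _ "\<bar>lam\<bar>"])
  show "eventually (\<lambda>n. norm (-lam * (real (Tn n) - \<tau> * U n)) \<le> \<bar>lam\<bar> * norm (U n * eps n)) sequentially"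
    using eventually_good
  proof eventually_elim
    case (elim n)
    have "\<bar>real (Tn n) - \<tau> * U n\<bar> \<le> U n * eps n"
      using good_Tn_le[OF elim] good_Tn_gt[OF elim] good_Ueps_ge_1[OF elim] by linarith
    hence "\<bar>lam\<bar> * \<bar>real (Tn n) - \<tau> * U n\<bar> \<le> \<bar>lam\<bar> * (U n * eps n)" by (intro mult_left_mono) auto
    thus ?case using good_eps_pos[OF elim] good_U_ge_1[OF elim] by (simp add: abs_mult)
  qed
qed

text \<open>The theorem inside the locale: \<open>ln E[e^{\<lambda> E(T_n)}] = -\<lambda> T_n + m ln S_n\<close>, and each of
  \<open>-\<lambda>(T_n - \<tau>U)\<close>, \<open>m(S_n - 1) - (\<phi> + \<lambda>\<tau>)U\<close> and \<open>m(ln S_n - (S_n - 1))\<close> is \<open>O(U \<epsilon>)\<close>.\<close>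
lemma log_mgf_asymptotics:
  "(\<lambda>n. ln (measure_pmf.expectation (chain_pmf k r n (u n) (m n) (nat \<lfloor>\<tau> * real (u n)\<rfloor>))
            (\<lambda>(E, C). exp (lam * real_of_int E))) - phi k r \<mu> lam \<tau> * real (u n))
   \<in> O(\<lambda>n. max 1 (real (u n) ^ 2 / real n))"
proof -
  define E where "E n = measure_pmf.expectation (chain_pmf k r n (u n) (m n) (Tn n))
      (\<lambda>(E, C). exp (lam * real_of_int E))" for n
  have "eventually (\<lambda>n. ln (E n) - phi k r \<mu> lam \<tau> * U n
      = -lam * (real (Tn n) - \<tau> * U n) + S_defect n + real (m n) * (ln (S n) - (S n - 1))) sequentially"
    using eventually_good log_S_linearisation(1)
  proof eventually_elim
    case (elim n)
    have "S n > 0" using elim(2) by linarith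
    hence "ln (E n) = -lam * real (Tn n) + real (m n) * ln (S n)"
      unfolding E_def good_chain_mgf[OF elim(1)] by (simp add: ln_mult ln_realpow)
    thus ?case unfolding S_defect_def by (simp add: algebra_simps)
  qed
  moreover have "(\<lambda>n. -lam * (real (Tn n) - \<tau> * U n) + S_defect n + real (m n) * (ln (S n) - (S n - 1)))
      \<in> O(\<lambda>n. max 1 (real (u n) ^ 2 / real n))"
    by (rule landau_o.big_trans[OF _ Ueps_bigo_target])
      (intro sum_in_bigo(1) Tn_rounding S_defect_bigo log_S_linearisation(2))
  ultimately have "(\<lambda>n. ln (E n) - phi k r \<mu> lam \<tau> * U n) \<in> O(\<lambda>n. max 1 (real (u n) ^ 2 / real n))"
    by (simp add: landau_o.big.in_cong)
  thus ?thesis unfolding E_def Tn_def U_def .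
qed

end

theorem mainTheorem8:
  fixes k r :: nat and u :: "nat \<Rightarrow> nat" and \<mu> \<tau> lam :: real and m :: "nat \<Rightarrow> nat"
  assumes "2 \<le> r" and "r \<le> k"
    and "filterlim u at_top sequentially"
    and "(\<lambda>n. real (u n) / real n) \<longlonglongrightarrow> 0"
    and "\<mu> > 0" and "\<tau> > 0"
    and "\<And>n. m n = nat \<lfloor>\<mu> * real n ^ (r-1) / real (u n) ^ (r-2)\<rfloor>"
  shows "(\<lambda>n. ln (measure_pmf.expectation
                  (chain_pmf k r n (u n) (m n) (nat \<lfloor>\<tau> * real (u n)\<rfloor>))
                  (\<lambda>(E, C). exp (lam * real_of_int E)))
              - phi k r \<mu> lam \<tau> * real (u n))
         \<in> O(\<lambda>n. max 1 (real (u n) ^ 2 / real n))"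
proof -
  interpret mgf_setting k r u \<mu> \<tau> lam m
    by unfold_locales (use assms in auto)
  show ?thesis by (rule log_mgf_asymptotics)
qed

end
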